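(* Assume $k>1$. Then (1) $b=(r+1)\sum_{i=1}^{k-1}(l_i+1)-(p+1)(e-r-1)+h=X+Y+Z$, where $X=(k-1)(r-1)\ge0$, $Y=k-(e-r)\ge0$, and $Z=(r+1)(p+\sum_{i=1}^{k-1}l_i)+k+h-pe-1\ge\sum_{i\in A}(r-r_i)\ge0$; (2) $c=\bigl(p+1+\sum_{i=1}^{k-1}(l_i+1)\bigr)(r+1)-b$.
   Context: Let $(R,\mathfrak m)$ be a one-dimensional local Noetherian domain with quotient field $K$, not regular, analytically irreducible (the integral closure $\overline R$ of $R$ in $K$ is a DVR and a finite $R$-module) and residually rational. Let $v$ be the valuation of $\overline R$ normalized so a uniformizer $t$ has value 1, $v(R)=\{v(a):a\in R\setminus\{0\}\}$, $\mathfrak C=(R:_K\overline R)=t^c\overline R$ with $c$ the least element of $v(R)$ with $c+\mathbb N\subseteq v(R)$, $\delta=\ell_R(\overline R/R)$, $r=\ell_R((R:_K\mathfrak m)/R)$, $b=(c-\delta)r-\delta$, $e$ the least positive element of $v(R)$, $n=c-\delta$. Write $v(R)=\{s_0=0<s_1<\cdots\}$ ($s_n=c$), $R_i=\{a\in R:v(a)\ge s_i\}$, $r_i=\ell_R((R:_KR_i)/(R:_KR_{i-1}))$. Let $i_0\in[1,n]$ be such that $s_{i_0-1}=\min\{y\in v(R):y\ge c-e\}$, $B=\{i_0,\dots,n\}$, $A=\{1,\dots,n\}\setminus B$. Let $x\in\mathfrak m$ with $v(x)=e$ and $k=\ell_R(R/(\mathfrak C+xR))$. When $k>1$: $p$ is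 the integer with $c-e\le pe<c$, $h=(p+1)e-c$; $y_1<\dots<y_{k-1}$ are the nonzero elements of $v(R)\setminus v(\mathfrak C+xR)$ (equivalently, the $y\in v(R)$ with $0<y<c$ and $y-e\notin v(R)$; they are not multiples of $e$, exceed $e$, and have distinct residues mod $e$); $l_i\ge0$ is the integer with $y_i+l_ie<c\le y_i+(l_i+1)e$. Then $v(R)$ is the disjoint union of $\{0,e,\dots,pe\}$, $\{m\ge c\}$ and the sets $\{y_i,y_i+e,\dots,y_i+l_ie\}$. *)

theory Defs
  imports "HOL-Computational_Algebra.Polynomial"
begin

text \<open>The quotient field K is a type 'k of class field (K = UNIV). The valuation v of the DVR is a map 'k => int;
  its value at 0 is irrelevant and "v(z) >= s" for z = 0 is read as true.\<close>

definition subring :: "'k::field set \<Rightarrow> bool" where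
  "subring R \<longleftrightarrow> 0 \<in> R \<and> 1 \<in> R \<and> (\<forall>a\<in>R. \<forall>b\<in>R. a + b \<in> R \<and> a * b \<in> R \<and> - a \<in> R)"

definition is_ideal :: "'k::field set \<Rightarrow> 'k set \<Rightarrow> bool" where
  "is_ideal R I \<longleftrightarrow> I \<subseteq> R \<and> 0 \<in> I \<and> (\<forall>a\<in>I. \<forall>b\<in>I. a + b \<in> I) \<and> (\<forall>r\<in>R. \<forall>a\<in>I. r * a \<in> I)"

definition is_prime_ideal :: "'k::field set \<Rightarrow> 'k set \<Rightarrow> bool" where
  "is_prime_ideal R P \<longleftrightarrow> is_ideal R P \<and> P \<noteq> R \<and> (\<forall>a\<in>R. \<forall>b\<in>R. a * b \<in> P \<longrightarrow> a \<in> P \<or> b \<in> P)"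

definition lin_span :: "'k::field set \<Rightarrow> 'k set \<Rightarrow> 'k set" where
  "lin_span R G = {\<Sum>g\<in>G. f g * g | f. \<forall>g\<in>G. f g \<in> R}"

definition noetherian :: "'k::field set \<Rightarrow> bool" where
  "noetherian R \<longleftrightarrow> (\<forall>I. is_ideal R I \<longrightarrow> (\<exists>G. finite G \<and> G \<subseteq> I \<and> I = lin_span R G))"

text \<open>Non-units of R; R is local iff they form an ideal, which is then the maximal ideal m.\<close>
definition max_ideal :: "'k::field set \<Rightarrow> 'k set" where
  "max_ideal R = {a \<in> R. \<not> (\<exists>b\<in>R. a * b = 1)}"

definition local_ring :: "'k::field set \<Rightarrow> bool" where
  "local_ring R \<longleftrightarrow> is_ideal R (max_ideal R)"

text \<open>Krull dimension one (R is a domain, so {0} is prime).\<close>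
definition krull_dim_one :: "'k::field set \<Rightarrow> bool" where
  "krull_dim_one R \<longleftrightarrow> (\<exists>P. is_prime_ideal R P \<and> P \<noteq> {0}) \<and>
     (\<forall>P Q. is_prime_ideal R P \<longrightarrow> is_prime_ideal R Q \<longrightarrow> P \<subset> Q \<longrightarrow> P = {0})"

definition regular_dim_one :: "'k::field set \<Rightarrow> bool" where
  "regular_dim_one R \<longleftrightarrow> (\<exists>x\<in>R. max_ideal R = {x * a | a. a \<in> R})"

definition quotient_field_of :: "'k::field set \<Rightarrow> bool" where
  "quotient_field_of R \<longleftrightarrow> (\<forall>z. \<exists>a\<in>R. \<exists>b\<in>R. b \<noteq> 0 \<and> z = a / b)"

definition integral_closure :: "'k::field set \<Rightarrow> 'k set" where
  "integral_closure R = {z. \<exists>q::'k poly. lead_coeff q = 1 \<and> (\<forall>i. coeff q i \<in> R) \<and> poly q z = 0}"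

definition normalized_dval :: "('k::field \<Rightarrow> int) \<Rightarrow> bool" where
  "normalized_dval v \<longleftrightarrow>
     (\<forall>x y. x \<noteq> 0 \<longrightarrow> y \<noteq> 0 \<longrightarrow> v (x * y) = v x + v y) \<and>
     (\<forall>x y. x \<noteq> 0 \<longrightarrow> y \<noteq> 0 \<longrightarrow> x + y \<noteq> 0 \<longrightarrow> min (v x) (v y) \<le> v (x + y)) \<and>
     (\<exists>t. t \<noteq> 0 \<and> v t = 1)"

definition val_ring :: "('k::field \<Rightarrow> int) \<Rightarrow> 'k set" where
  "val_ring v = {z. z = 0 \<or> 0 \<le> v z}"

definition finite_module :: "'k::field set \<Rightarrow> 'k set \<Rightarrow> bool" where
  "finite_module R M \<longleftrightarrow> (\<exists>G. finite G \<and> G \<subseteq> M \<and> M = lin_span R G)"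

text \<open>Residually rational: R/m = Rbar/t Rbar.\<close>
definition residually_rational :: "'k::field set \<Rightarrow> ('k \<Rightarrow> int) \<Rightarrow> bool" where
  "residually_rational R v \<longleftrightarrow> (\<forall>z \<in> val_ring v. \<exists>a\<in>R. z - a = 0 \<or> 1 \<le> v (z - a))"

text \<open>R-submodules of K and lengths of quotients M/N (N \<subseteq> M): the supremum of the lengths
  of strictly increasing chains of R-submodules from N to M.\<close>
definition submod :: "'k::field set \<Rightarrow> 'k set \<Rightarrow> bool" where
  "submod R M \<longleftrightarrow> 0 \<in> M \<and> (\<forall>x\<in>M. \<forall>y\<in>M. x + y \<in> M) \<and> (\<forall>a\<in>R. \<forall>x\<in>M. a * x \<in> M)"

definition ell :: "'k::field set \<Rightarrow> 'k set \<Rightarrow> 'k set \<Rightarrow> nat" where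
  "ell R N M = Sup {n. \<exists>f :: nat \<Rightarrow> 'k set. f 0 = N \<and> f n = M \<and>
       (\<forall>i<n. f i \<subset> f (Suc i)) \<and> (\<forall>i\<le>n. submod R (f i))}"

definition colon :: "'k::field set \<Rightarrow> 'k set \<Rightarrow> 'k set" where
  "colon R X = {z. \<forall>y\<in>X. z * y \<in> R}"

text \<open>Value set of a subset of K (nonzero elements); values are assumed nonnegative.\<close>
definition vals :: "('k::field \<Rightarrow> int) \<Rightarrow> 'k set \<Rightarrow> nat set" where
  "vals v S = {nat (v z) | z. z \<in> S \<and> z \<noteq> 0}"

definition vR :: "'k::field set \<Rightarrow> ('k \<Rightarrow> int) \<Rightarrow> nat set" where
  "vR R v = vals v R"

definition cond_c :: "'k::field set \<Rightarrow> ('k \<Rightarrow> int) \<Rightarrow> nat" where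
  "cond_c R v = (LEAST c. c \<in> vR R v \<and> (\<forall>m\<ge>c. m \<in> vR R v))"

definition delta :: "'k::field set \<Rightarrow> ('k \<Rightarrow> int) \<Rightarrow> nat" where
  "delta R v = ell R R (val_ring v)"

definition type_r :: "'k::field set \<Rightarrow> nat" where
  "type_r R = ell R R (colon R (max_ideal R))"

definition bnum :: "'k::field set \<Rightarrow> ('k \<Rightarrow> int) \<Rightarrow> int" where
  "bnum R v = (int (cond_c R v) - int (delta R v)) * int (type_r R) - int (delta R v)"

definition mult_e :: "'k::field set \<Rightarrow> ('k \<Rightarrow> int) \<Rightarrow> nat" where
  "mult_e R v = (LEAST y. y \<in> vR R v \<and> 0 < y)"

definition nnum :: "'k::field set \<Rightarrow> ('k \<Rightarrow> int) \<Rightarrow> int" where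
  "nnum R v = int (cond_c R v) - int (delta R v)"

text \<open>s i: the i-th element (from 0) of v(R) in increasing order.\<close>
definition sval :: "'k::field set \<Rightarrow> ('k \<Rightarrow> int) \<Rightarrow> nat \<Rightarrow> nat" where
  "sval R v i = (LEAST y. y \<in> vR R v \<and> card {z \<in> vR R v. z < y} = i)"

definition Rsub :: "'k::field set \<Rightarrow> ('k \<Rightarrow> int) \<Rightarrow> nat \<Rightarrow> 'k set" where
  "Rsub R v i = {a \<in> R. a = 0 \<or> int (sval R v i) \<le> v a}"

definition rr :: "'k::field set \<Rightarrow> ('k \<Rightarrow> int) \<Rightarrow> nat \<Rightarrow> nat" where
  "rr R v i = ell R (colon R (Rsub R v (i - 1))) (colon R (Rsub R v i))"

definition i_zero :: "'k::field set \<Rightarrow> ('k \<Rightarrow> int) \<Rightarrow> nat" where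
  "i_zero R v = (THE i. 1 \<le> i \<and> int i \<le> nnum R v \<and>
      int (sval R v (i - 1)) = int (LEAST y. y \<in> vR R v \<and> int (cond_c R v) - int (mult_e R v) \<le> int y))"

definition setA :: "'k::field set \<Rightarrow> ('k \<Rightarrow> int) \<Rightarrow> nat set" where
  "setA R v = {i. 1 \<le> i \<and> int i \<le> nnum R v} - {i. i_zero R v \<le> i \<and> int i \<le> nnum R v}"

definition CxR :: "'k::field set \<Rightarrow> ('k \<Rightarrow> int) \<Rightarrow> 'k \<Rightarrow> 'k set" where
  "CxR R v x = {a + x * b | a b. a \<in> colon R (val_ring v) \<and> b \<in> R}"

definition knum :: "'k::field set \<Rightarrow> ('k \<Rightarrow> int) \<Rightarrow> 'k \<Rightarrow> nat" where
  "knum R v x = ell R (CxR R v x) R"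

definition pnum :: "'k::field set \<Rightarrow> ('k \<Rightarrow> int) \<Rightarrow> int" where
  "pnum R v = (THE p::int. int (cond_c R v) - int (mult_e R v) \<le> p * int (mult_e R v)
                  \<and> p * int (mult_e R v) < int (cond_c R v))"

definition hnum :: "'k::field set \<Rightarrow> ('k \<Rightarrow> int) \<Rightarrow> int" where
  "hnum R v = (pnum R v + 1) * int (mult_e R v) - int (cond_c R v)"

text \<open>The set {y_1,...,y_(k-1)}: nonzero elements of v(R) not in v(C + xR).\<close>
definition Yset :: "'k::field set \<Rightarrow> ('k \<Rightarrow> int) \<Rightarrow> 'k \<Rightarrow> nat set" where
  "Yset R v x = {y \<in> vR R v. y \<noteq> 0 \<and> y \<notin> vals v (CxR R v x)}"

definition lnum :: "'k::field set \<Rightarrow> ('k \<Rightarrow> int) \<Rightarrow> nat \<Rightarrow> int" where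
  "lnum R v y = (THE l::int. 0 \<le> l \<and> int y + l * int (mult_e R v) < int (cond_c R v)
                  \<and> int (cond_c R v) \<le> int y + (l + 1) * int (mult_e R v))"

end

theory Submission
  imports Defs
begin

text \<open>
  Everything is read off the value semigroup \<open>S = v(R)\<close>. If \<open>N \<subseteq> M \<subseteq> Rbar\<close> are
  \<open>R\<close>-modules and \<open>N\<close> contains \<open>t\<^sup>a Rbar\<close> for some \<open>a\<close>, residual rationality gives
  \<open>length(M/N) = |v(M) - v(N)|\<close>, so \<open>\<delta>\<close>, \<open>k\<close>, \<open>r\<close> and the \<open>r\<^sub>i\<close> all become counts of
  values. In \<open>S \<inter> [0, c)\<close> each residue class modulo \<open>e\<close> is an arithmetic progression starting
  at an element of the Apery set and having exactly one term in \<open>[c - e, c)\<close>; hence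
  \<open>n = \<Sum>(l\<^sub>a + 1)\<close> over the \<open>k\<close> Apery elements \<open>a < c\<close>, and \<open>[c - e, c)\<close> contains
  exactly \<open>k\<close> elements of \<open>S\<close>. The gaps of \<open>S\<close> in \<open>[c - e, c)\<close> are values of \<open>(R : m)\<close>,
  whence \<open>r \<ge> e - k\<close>; multiplication by an element of value \<open>s\<^sub>i\<^sub>-\<^sub>1\<close> embeds
  \<open>(R : R\<^sub>i)/(R : R\<^sub>i\<^sub>-\<^sub>1)\<close> into \<open>(R : m)/R\<close>, whence \<open>r\<^sub>i \<le> r\<close>; and the \<open>r\<^sub>i\<close> with
  \<open>i \<in> A\<close> add up to the number of values of \<open>(R : R\<^sub>i\<^sub>0\<^sub>-\<^sub>1)\<close> outside \<open>S\<close>, among which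
  are all gaps above \<open>e\<close>, so their sum is at least \<open>c - n - e + 1\<close>. Both formulas then follow
  by arithmetic from \<open>b = n r - (c - n)\<close> and \<open>h = (p + 1) e - c\<close>.
\<close>

section \<open>Numerical semigroups\<close>

lemma congruent_ge_eq_add_mult:
  fixes a w e :: nat
  assumes "a \<le> w" "w mod e = a mod e"
  shows "w = a + (w - a) div e * e"
proof -
  have "e dvd w - a" using mod_eq_dvd_iff_nat[OF assms(1)] assms(2) by simp
  then show ?thesis using assms(1) by simp
qed

locale numerical_semigroup =
  fixes S :: "nat set" and c e :: nat
  assumes zero_mem: "0 \<in> S"
    and add_mem: "a \<in> S \<Longrightarrow> b \<in> S \<Longrightarrow> a + b \<in> S"
    and conductor_pos: "0 < c"
    and ge_conductor_mem: "c \<le> m \<Longrightarrow> m \<in> S"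
    and conductor_pred_notin: "c - 1 \<notin> S"
    and multiplicity_mem: "e \<in> S"
    and multiplicity_pos: "0 < e"
    and multiplicity_le: "y \<in> S \<Longrightarrow> 0 < y \<Longrightarrow> e \<le> y"
begin

lemma multiplicity_le_conductor: "e \<le> c"
  using multiplicity_le[OF ge_conductor_mem[OF order_refl] conductor_pos] .

lemma add_mult_multiplicity_mem: "a \<in> S \<Longrightarrow> a + j * e \<in> S"
proof (induction j)
  case (Suc j)
  then have "a + j * e + e \<in> S" using add_mem multiplicity_mem by blast
  then show ?case by (simp add: algebra_simps)
qed simp

lemma mult_multiplicity_mem: "j * e \<in> S"
  using add_mult_multiplicity_mem[OF zero_mem] by simp

definition apery :: "nat set" where
  "apery = {a \<in> S. \<not> (e \<le> a \<and> a - e \<in> S)}"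

lemma zero_in_apery: "0 \<in> apery"
  using zero_mem multiplicity_pos by (simp add: apery_def)

lemma mem_if_apery_le_congruent:
  assumes "a \<in> apery" "a \<le> w" "w mod e = a mod e"
  shows "w \<in> S"
proof -
  have "a \<in> S" using assms(1) unfolding apery_def by simp
  then show ?thesis
    using add_mult_multiplicity_mem congruent_ge_eq_add_mult[OF assms(2,3)] by metis
qed

lemma apery_congruent_eq:
  assumes "a \<in> apery" "a' \<in> apery" "a mod e = a' mod e"
  shows "a = a'"
proof -
  have False
    if ap: "b \<in> apery" "b' \<in> apery" and lt: "b < b'" and "b mod e = b' mod e" for b b'
  proof -
    define j where "j = (b' - b) div e"
    have b': "b' = b + j * e" unfolding j_def
      using congruent_ge_eq_add_mult[of b b' e] that by simp
    then obtain i where "j = Suc i" using lt by (cases j) auto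
    then have "e \<le> b'" "b' - e = b + i * e" using b' by simp_all
    then show False
      using ap add_mult_multiplicity_mem[of b i] unfolding apery_def by auto
  qed
  then show ?thesis using assms by (metis linorder_neqE_nat)
qed

lemma apery_below:
  assumes "w \<in> S"
  obtains a where "a \<in> apery" "a \<le> w" "w mod e = a mod e"
proof -
  define a where "a = (LEAST u. u \<in> S \<and> u mod e = w mod e)"
  have "a \<in> S \<and> a mod e = w mod e"
    unfolding a_def by (rule LeastI[of _ w]) (simp add: assms)
  moreover have "a \<le> w"
    unfolding a_def by (rule Least_le) (simp add: assms)
  ultimately have a: "a \<in> S" "a mod e = w mod e" "a \<le> w" by simp_all
  have "a \<in> apery"
  proof -
    have False if "e \<le> a" "a - e \<in> S"
    proof -
      have "(a - e) mod e = w mod e" using a(2) that(1) by (simp add: le_mod_geq)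
      then have "(LEAST u. u \<in> S \<and> u mod e = w mod e) \<le> a - e"
        using that(2) by (intro Least_le) simp
      then have "a \<le> a - e" unfolding a_def .
      then show False using that(1) multiplicity_pos by linarith
    qed
    then show ?thesis using a(1) unfolding apery_def by blast
  qed
  then show thesis using that a by simp
qed

definition steps_below_conductor :: "nat \<Rightarrow> nat" where
  "steps_below_conductor a = (c - 1 - a) div e"

lemma steps_below_conductor:
  assumes "a < c"
  shows "a + steps_below_conductor a * e < c" "c \<le> a + steps_below_conductor a * e + e"
proof -
  have "(c - 1 - a) div e * e \<le> c - 1 - a" "c - 1 - a < (c - 1 - a) div e * e + e"
  proof -
    have "(c - 1 - a) div e * e + (c - 1 - a) mod e = c - 1 - a" by (rule div_mult_mod_eq)
    moreover have "(c - 1 - a) mod e < e" using multiplicity_pos by simp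
    ultimately show "(c - 1 - a) div e * e \<le> c - 1 - a" "c - 1 - a < (c - 1 - a) div e * e + e"
      by linarith+
  qed
  then show "a + steps_below_conductor a * e < c" "c \<le> a + steps_below_conductor a * e + e"
    using assms unfolding steps_below_conductor_def by linarith+
qed

lemma steps_below_conductor_unique:
  fixes l :: int
  assumes "a < c" "int a + l * int e < int c" "int c \<le> int a + (l + 1) * int e"
  shows "l = int (steps_below_conductor a)"
proof -
  define L where "L = int (steps_below_conductor a)"
  have L: "int a + L * int e < int c" "int c \<le> int a + (L + 1) * int e"
    using steps_below_conductor[OF assms(1)] unfolding L_def
    by (simp_all add: algebra_simps flip: of_nat_mult)
  have "\<not> l' < l''"
    if "int c \<le> int a + (l' + 1) * int e" "int a + l'' * int e < int c" for l' l'' :: int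
  proof
    assume "l' < l''"
    then have "(l' + 1) * int e \<le> l'' * int e" using multiplicity_pos
      by (intro mult_right_mono) auto
    then show False using that by linarith
  qed
  then show ?thesis using assms(2,3) L unfolding L_def by (meson linorder_neqE)
qed

definition residue_segment :: "nat \<Rightarrow> nat \<Rightarrow> nat set" where
  "residue_segment lo a = {w. lo \<le> w \<and> w < c \<and> a \<le> w \<and> w mod e = a mod e}"

lemma card_interval_below_conductor:
  "card (S \<inter> {lo..<c}) = (\<Sum>a\<in>apery \<inter> {..<c}. card (residue_segment lo a))"
proof -
  have "S \<inter> {lo..<c} = (\<Union>a\<in>apery \<inter> {..<c}. residue_segment lo a)"
  proof
    show "S \<inter> {lo..<c} \<subseteq> (\<Union>a\<in>apery \<inter> {..<c}. residue_segment lo a)"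
    proof
      fix w assume w: "w \<in> S \<inter> {lo..<c}"
      then obtain a where "a \<in> apery" "a \<le> w" "w mod e = a mod e" using apery_below by blast
      then show "w \<in> (\<Union>a\<in>apery \<inter> {..<c}. residue_segment lo a)"
        using w unfolding residue_segment_def by auto
    qed
    show "(\<Union>a\<in>apery \<inter> {..<c}. residue_segment lo a) \<subseteq> S \<inter> {lo..<c}"
      unfolding residue_segment_def using mem_if_apery_le_congruent by auto
  qed
  moreover have "card (\<Union>a\<in>apery \<inter> {..<c}. residue_segment lo a)
      = (\<Sum>a\<in>apery \<inter> {..<c}. card (residue_segment lo a))"
    by (rule card_UN_disjoint)
      (auto simp: residue_segment_def dest: apery_congruent_eq intro: finite_subset[of _ "{..<c}"])
  ultimately show ?thesis by simp
qed

lemma residue_segment_0: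
  assumes "a < c"
  shows "residue_segment 0 a = (\<lambda>j. a + j * e) ` {..steps_below_conductor a}"
proof
  show "residue_segment 0 a \<subseteq> (\<lambda>j. a + j * e) ` {..steps_below_conductor a}"
  proof
    fix w assume "w \<in> residue_segment 0 a"
    then have w: "a \<le> w" "w < c" "w mod e = a mod e" unfolding residue_segment_def by auto
    define j where "j = (w - a) div e"
    have wj: "w = a + j * e" unfolding j_def using congruent_ge_eq_add_mult[OF w(1,3)] .
    have "j * e \<le> c - 1 - a" using wj w(2) by linarith
    then have "j * e div e \<le> (c - 1 - a) div e" by (rule div_le_mono)
    then have "j \<le> steps_below_conductor a"
      unfolding steps_below_conductor_def using multiplicity_pos by simp
    then show "w \<in> (\<lambda>j. a + j * e) ` {..steps_below_conductor a}" using wj by blast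
  qed
  show "(\<lambda>j. a + j * e) ` {..steps_below_conductor a} \<subseteq> residue_segment 0 a"
  proof
    fix w assume "w \<in> (\<lambda>j. a + j * e) ` {..steps_below_conductor a}"
    then obtain j where j: "j \<le> steps_below_conductor a" "w = a + j * e" by blast
    have "j * e \<le> steps_below_conductor a * e" using j(1) by simp
    then have "w < c" using steps_below_conductor(1)[OF assms] j(2) by linarith
    then show "w \<in> residue_segment 0 a" using j(2) unfolding residue_segment_def by simp
  qed
qed

lemma card_residue_segment_0:
  assumes "a < c"
  shows "card (residue_segment 0 a) = steps_below_conductor a + 1"
proof -
  have "inj_on (\<lambda>j. a + j * e) {..steps_below_conductor a}"
    using multiplicity_pos by (intro inj_onI) simp
  then show ?thesis using residue_segment_0[OF assms] by (simp add: card_image)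
qed

lemma residue_segment_top:
  assumes "a < c"
  shows "residue_segment (c - e) a = {a + steps_below_conductor a * e}"
proof
  show "residue_segment (c - e) a \<subseteq> {a + steps_below_conductor a * e}"
  proof
    fix w assume w: "w \<in> residue_segment (c - e) a"
    then have "w \<in> residue_segment 0 a" unfolding residue_segment_def by auto
    then obtain j where j: "j \<le> steps_below_conductor a" "w = a + j * e"
      using residue_segment_0[OF assms] by blast
    have "j = steps_below_conductor a"
    proof (rule ccontr)
      assume "j \<noteq> steps_below_conductor a"
      then have "Suc j * e \<le> steps_below_conductor a * e" using j(1) by (intro mult_le_mono1) simp
      then have "w + e < c" using steps_below_conductor(1)[OF assms] j(2) by simp
      moreover have "c - e \<le> w" using w unfolding residue_segment_def by simp
      ultimately show False using multiplicity_le_conductor by linarith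
    qed
    then show "w \<in> {a + steps_below_conductor a * e}" using j by simp
  qed
  show "{a + steps_below_conductor a * e} \<subseteq> residue_segment (c - e) a"
    using steps_below_conductor[OF assms] unfolding residue_segment_def by simp
qed

lemma card_below_conductor:
  "card (S \<inter> {..<c}) = (\<Sum>a\<in>apery \<inter> {..<c}. steps_below_conductor a + 1)"
proof -
  have "S \<inter> {..<c} = S \<inter> {0..<c}" by auto
  then show ?thesis
    using card_interval_below_conductor[of 0] card_residue_segment_0 by simp
qed

lemma card_top_interval_below_conductor:
  "card (S \<inter> {c - e..<c}) = card (apery \<inter> {..<c})"
  using card_interval_below_conductor[of "c - e"] residue_segment_top by simp

lemma card_gaps: "card ({..<c} - S) = c - card (S \<inter> {..<c})"
proof -
  have "card {..<c} = card ({..<c} \<inter> S) + card ({..<c} - S)" by (rule card_Int_Diff) simp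
  then show ?thesis by (simp add: Int_commute)
qed

lemma card_gaps_above_multiplicity: "card ({e..<c} - S) + (e - 1) = card ({..<c} - S)"
proof -
  have "x \<in> {..<c} - S \<longleftrightarrow> x \<in> {1..<e} \<union> ({e..<c} - S)" for x
    using zero_mem multiplicity_le[of x] multiplicity_le_conductor by (cases "x = 0") auto
  then have "{..<c} - S = {1..<e} \<union> ({e..<c} - S)" by blast
  moreover have "card ({1..<e} \<union> ({e..<c} - S)) = card {1..<e} + card ({e..<c} - S)"
    by (rule card_Un_disjoint) auto
  ultimately show ?thesis by simp
qed

definition rank :: "nat \<Rightarrow> nat" where
  "rank y = card {z \<in> S. z < y}"

lemma rank_strict_mono: "y \<in> S \<Longrightarrow> y < y' \<Longrightarrow> rank y < rank y'"
  unfolding rank_def by (rule psubset_card_mono) auto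

lemma rank_inj: "y \<in> S \<Longrightarrow> y' \<in> S \<Longrightarrow> rank y = rank y' \<Longrightarrow> y = y'"
  using rank_strict_mono by (metis less_irrefl linorder_neqE_nat)

lemma rank_surj: "\<exists>y\<in>S. rank y = i"
proof (induction i)
  case 0
  have "rank 0 = 0" unfolding rank_def by simp
  then show ?case using zero_mem by blast
next
  case (Suc i)
  then obtain y where y: "y \<in> S" "rank y = i" by blast
  have ex: "y + c \<in> S \<and> y < y + c" using ge_conductor_mem conductor_pos by simp
  define y' where "y' = (LEAST z. z \<in> S \<and> y < z)"
  have y': "y' \<in> S" "y < y'" using LeastI[of "\<lambda>z. z \<in> S \<and> y < z", OF ex] unfolding y'_def by auto
  have "z < y" if "z \<in> S" "z < y'" "z \<noteq> y" for z
  proof (rule ccontr)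
    assume "\<not> z < y"
    then have "y' \<le> z" unfolding y'_def using that by (intro Least_le) simp
    then show False using that(2) by simp
  qed
  then have "{z \<in> S. z < y'} = insert y {z \<in> S. z < y}" using y y' by auto
  then have "rank y' = Suc (rank y)" unfolding rank_def by simp
  then show ?case using y y' by auto
qed

lemma rank_below_conductor: "rank c = card (S \<inter> {..<c})"
  unfolding rank_def by (rule arg_cong[of _ _ card]) auto

definition element :: "nat \<Rightarrow> nat" where
  "element i = (LEAST y. y \<in> S \<and> rank y = i)"

lemma element: "element i \<in> S" "rank (element i) = i"
  using LeastI_ex[of "\<lambda>y. y \<in> S \<and> rank y = i"] rank_surj unfolding element_def by blast+

lemma element_rank: "y \<in> S \<Longrightarrow> element (rank y) = y"
  using element rank_inj by blast

lemma element_mono: "i \<le> j \<Longrightarrow> element i \<le> element j"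
  using element rank_strict_mono by (metis leD not_le)

lemma element_0: "element 0 = 0"
  using element_rank[OF zero_mem] unfolding rank_def by simp

lemma element_le_next:
  assumes "0 < i" "u \<in> S" "element (i - 1) < u"
  shows "element i \<le> u"
proof (rule ccontr)
  assume "\<not> element i \<le> u"
  then have "rank u < i" using rank_strict_mono[OF assms(2), of "element i"] element(2)[of i]
    by simp
  moreover have "i - 1 < rank u" using rank_strict_mono[OF element(1) assms(3)] element(2) by simp
  ultimately show False using assms(1) by linarith
qed

definition window_start :: nat where
  "window_start = (LEAST y. y \<in> S \<and> c - e \<le> y)"

lemma window_start: "window_start \<in> S" "c - e \<le> window_start" "window_start < c"
proof -
  have "window_start \<in> S \<and> c - e \<le> window_start"
    unfolding window_start_def by (rule LeastI[of _ c]) (simp add: ge_conductor_mem)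
  then show "window_start \<in> S" "c - e \<le> window_start" by simp_all
  have "c - e \<le> steps_below_conductor 0 * e" "steps_below_conductor 0 * e < c"
    using steps_below_conductor[of 0] conductor_pos by simp_all
  then have "window_start \<le> steps_below_conductor 0 * e"
    unfolding window_start_def using mult_multiplicity_mem by (intro Least_le) simp
  then show "window_start < c" using \<open>steps_below_conductor 0 * e < c\<close> by simp
qed

lemma rank_window_start: "rank window_start = card (S \<inter> {..<c - e})"
proof -
  have "{z \<in> S. z < window_start} = S \<inter> {..<c - e}"
    using window_start(2) Least_le[of "\<lambda>y. y \<in> S \<and> c - e \<le> y"]
    unfolding window_start_def by (fastforce simp: not_less)
  then show ?thesis unfolding rank_def by simp
qed

lemma card_below_window: "card (S \<inter> {..<c - e}) + card (apery \<inter> {..<c}) = card (S \<inter> {..<c})"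
proof -
  have "S \<inter> {..<c} = (S \<inter> {..<c - e}) \<union> (S \<inter> {c - e..<c})" by auto
  moreover have "card ((S \<inter> {..<c - e}) \<union> (S \<inter> {c - e..<c}))
      = card (S \<inter> {..<c - e}) + card (S \<inter> {c - e..<c})"
    by (rule card_Un_disjoint) auto
  ultimately have "card (S \<inter> {..<c}) = card (S \<inter> {..<c - e}) + card (S \<inter> {c - e..<c})"
    by simp
  then show ?thesis using card_top_interval_below_conductor by simp
qed

end

section \<open>Discrete valuations\<close>

locale normalized_valuation =
  fixes v :: "'k::field \<Rightarrow> int"
  assumes normalized: "normalized_dval v"
begin

lemma v_mult: "x \<noteq> 0 \<Longrightarrow> y \<noteq> 0 \<Longrightarrow> v (x * y) = v x + v y"
  using normalized unfolding normalized_dval_def by blast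

lemma v_add_min: "x \<noteq> 0 \<Longrightarrow> y \<noteq> 0 \<Longrightarrow> x + y \<noteq> 0 \<Longrightarrow> min (v x) (v y) \<le> v (x + y)"
  using normalized unfolding normalized_dval_def by blast

lemma v_one: "v 1 = 0"
  using v_mult[of 1 1] by simp

lemma v_minus: "x \<noteq> 0 \<Longrightarrow> v (- x) = v x"
  using v_mult[of "-1" "-1"] v_mult[of "-1" x] v_one by simp

lemma v_divide: "x \<noteq> 0 \<Longrightarrow> y \<noteq> 0 \<Longrightarrow> v (x / y) = v x - v y"
  using v_mult[of "x / y" y] by simp

lemma v_power: "x \<noteq> 0 \<Longrightarrow> v (x ^ n) = int n * v x"
  by (induction n) (auto simp: v_one v_mult algebra_simps)

lemma v_add_eq_left:
  assumes "x \<noteq> 0" "y = 0 \<or> v x < v y"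
  shows "x + y \<noteq> 0" "v (x + y) = v x"
proof -
  have "x + y \<noteq> 0 \<and> v (x + y) = v x"
  proof (cases "y = 0")
    case False
    with assms have lt: "v x < v y" by simp
    have nz: "x + y \<noteq> 0" using lt v_minus[OF assms(1)] by (auto simp: add_eq_0_iff)
    have "v x \<le> v (x + y)" using v_add_min[OF assms(1) False nz] lt by simp
    moreover have "min (v (x + y)) (v y) \<le> v x"
      using v_add_min[OF nz, of "- y"] v_minus[OF False] False assms(1) by simp
    ultimately show ?thesis using nz lt by linarith
  qed (use assms in simp)
  then show "x + y \<noteq> 0" "v (x + y) = v x" by simp_all
qed

text \<open>\<open>val_ge a\<close> is the fractional ideal \<open>t\<^sup>a Rbar\<close>; \<open>0\<close> is put in explicitly because
  \<open>v 0\<close> is an arbitrary value.\<close>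

definition val_ge :: "int \<Rightarrow> 'k set" where
  "val_ge a = {z. z = 0 \<or> a \<le> v z}"

lemma val_ge_iff: "z \<in> val_ge a \<longleftrightarrow> z = 0 \<or> a \<le> v z"
  unfolding val_ge_def by simp

lemma val_ring_iff: "z \<in> val_ring v \<longleftrightarrow> z = 0 \<or> 0 \<le> v z"
  unfolding val_ring_def by simp

lemma val_ring_eq_val_ge: "val_ring v = val_ge 0"
  unfolding val_ring_def val_ge_def ..

lemma val_ge_antimono: "a \<le> b \<Longrightarrow> val_ge b \<subseteq> val_ge a"
  unfolding val_ge_def by auto

lemma val_ge_add: "x \<in> val_ge a \<Longrightarrow> y \<in> val_ge a \<Longrightarrow> x + y \<in> val_ge a"
  unfolding val_ge_def using v_add_min[of x y]
  by (cases "x + y = 0"; cases "x = 0"; cases "y = 0") auto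

lemma val_ge_mult: "x \<in> val_ge a \<Longrightarrow> y \<in> val_ge b \<Longrightarrow> x * y \<in> val_ge (a + b)"
  unfolding val_ge_def using v_mult[of x y] by (cases "x = 0"; cases "y = 0") auto

lemma v_add_cases:
  assumes "y + w \<noteq> 0" "w \<in> val_ge d"
  obtains "y \<noteq> 0" "v (y + w) = v y" | "d \<le> v (y + w)"
proof (cases "y \<noteq> 0 \<and> (w = 0 \<or> v y < v w)")
  case True
  then show thesis using that(1) v_add_eq_left[of y w] by blast
next
  case False
  have "y + w \<in> val_ge d"
  proof (cases "y = 0")
    case False
    then have "y \<in> val_ge d" using \<open>\<not> (y \<noteq> 0 \<and> (w = 0 \<or> v y < v w))\<close> assms(2)
      unfolding val_ge_def by auto
    then show ?thesis using val_ge_add assms(2) by blast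
  qed (use assms in simp)
  then show thesis using that(2) assms(1) unfolding val_ge_def by blast
qed

definition uniformizer :: 'k where
  "uniformizer = (SOME t. t \<noteq> 0 \<and> v t = 1)"

lemma uniformizer_power: "uniformizer ^ n \<noteq> 0" "v (uniformizer ^ n) = int n"
proof -
  have "uniformizer \<noteq> 0 \<and> v uniformizer = 1"
    unfolding uniformizer_def
    by (rule someI_ex) (use normalized in \<open>auto simp: normalized_dval_def\<close>)
  then show "uniformizer ^ n \<noteq> 0" "v (uniformizer ^ n) = int n" using v_power by auto
qed

lemma valsI: "z \<in> S \<Longrightarrow> z \<noteq> 0 \<Longrightarrow> nat (v z) \<in> vals v S"
  unfolding vals_def by blast

lemma valsE:
  assumes "g \<in> vals v S"
  obtains z where "z \<in> S" "z \<noteq> 0" "nat (v z) = g"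
  using assms unfolding vals_def by blast

lemma vals_mono: "S \<subseteq> T \<Longrightarrow> vals v S \<subseteq> vals v T"
  unfolding vals_def by blast

lemma mem_vals_if_val_ge_subset:
  assumes "val_ge (int a) \<subseteq> N" "a \<le> g"
  shows "g \<in> vals v N"
proof -
  have "uniformizer ^ g \<in> N"
    using assms uniformizer_power[of g] unfolding val_ge_def by auto
  then show ?thesis using valsI[of _ N] uniformizer_power[of g] by force
qed

lemma vals_val_ring: "vals v (val_ring v) = UNIV"
proof -
  have "g \<in> vals v (val_ring v)" for g
    by (rule mem_vals_if_val_ge_subset[of 0]) (simp_all add: val_ring_eq_val_ge)
  then show ?thesis by blast
qed

lemma finite_vals_diff:
  assumes "val_ge (int a) \<subseteq> N"
  shows "finite (vals v M - vals v N)"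
proof -
  have "vals v M - vals v N \<subseteq> {..<a}"
    using mem_vals_if_val_ge_subset[OF assms] not_less by blast
  then show ?thesis by (rule finite_subset) simp
qed

end

section \<open>Lengths of modules through value sets\<close>

lemma strict_chain_subset:
  assumes "\<forall>i<n. f i \<subset> f (Suc i)" "j \<le> k" "k \<le> n"
  shows "f j \<subseteq> f k"
  using assms by (intro lift_Suc_mono_le_ivl[of "{..<n}" f j k]) auto

locale valued_subring = normalized_valuation v for v :: "'k::field \<Rightarrow> int" +
  fixes R :: "'k set"
  assumes subring: "subring R"
    and integral_closure_eq: "integral_closure R = val_ring v"
    and residually_rational: "residually_rational R v"
begin

lemma R_zero: "0 \<in> R" and R_one: "1 \<in> R" and R_add: "a \<in> R \<Longrightarrow> b \<in> R \<Longrightarrow> a + b \<in> R"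
  and R_mult: "a \<in> R \<Longrightarrow> b \<in> R \<Longrightarrow> a * b \<in> R" and R_minus: "a \<in> R \<Longrightarrow> - a \<in> R"
  using subring unfolding subring_def by auto

lemma R_diff: "a \<in> R \<Longrightarrow> b \<in> R \<Longrightarrow> a - b \<in> R"
  using R_add[OF _ R_minus] by simp

lemma R_sum: "finite A \<Longrightarrow> (\<And>x. x \<in> A \<Longrightarrow> f x \<in> R) \<Longrightarrow> sum f A \<in> R"
  by (induction A rule: finite_induct) (auto intro: R_zero R_add)

lemma R_prod: "finite A \<Longrightarrow> (\<And>x. x \<in> A \<Longrightarrow> f x \<in> R) \<Longrightarrow> prod f A \<in> R"
  by (induction A rule: finite_induct) (auto intro: R_one R_mult)

lemma subset_val_ring: "R \<subseteq> val_ring v"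
proof
  fix a assume "a \<in> R"
  then have "\<forall>i. coeff [:-a, 1:] i \<in> R"
    using R_zero R_one R_minus by (simp add: coeff_pCons split: nat.splits)
  then have "a \<in> integral_closure R"
    unfolding integral_closure_def by (intro CollectI exI[of _ "[:-a, 1:]"]) simp
  then show "a \<in> val_ring v" using integral_closure_eq by simp
qed

lemma v_nonneg: "a \<in> R \<Longrightarrow> a \<noteq> 0 \<Longrightarrow> 0 \<le> v a"
  using subset_val_ring val_ring_iff by blast

lemma residue_approximation:
  assumes "u \<noteq> 0" "w \<noteq> 0" "v w = v u"
  obtains a where "a \<in> R" "w - a * u \<in> val_ge (v u + 1)"
proof -
  have "v (w / u) = 0" using v_divide[of w u] assms by simp
  then have "w / u \<in> val_ring v" unfolding val_ring_iff by simp
  then obtain a where a: "a \<in> R" "w / u - a = 0 \<or> 1 \<le> v (w / u - a)"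
    using residually_rational unfolding residually_rational_def by blast
  have eq: "w - a * u = u * (w / u - a)" using assms(1) by (simp add: algebra_simps)
  have "w - a * u \<in> val_ge (v u + 1)"
  proof (cases "w / u - a = 0")
    case False
    then have "v (w - a * u) = v u + v (w / u - a)" unfolding eq using v_mult[OF assms(1)] by blast
    then show ?thesis using a(2) False unfolding val_ge_iff by linarith
  qed (simp add: eq val_ge_iff)
  then show thesis using that a(1) by blast
qed

lemma submod_zero: "submod R M \<Longrightarrow> 0 \<in> M"
  and submod_add: "submod R M \<Longrightarrow> x \<in> M \<Longrightarrow> y \<in> M \<Longrightarrow> x + y \<in> M"
  and submod_smult: "submod R M \<Longrightarrow> a \<in> R \<Longrightarrow> x \<in> M \<Longrightarrow> a * x \<in> M"
  unfolding submod_def by auto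

lemma submod_diff: "submod R M \<Longrightarrow> x \<in> M \<Longrightarrow> y \<in> M \<Longrightarrow> x - y \<in> M"
  using submod_add[of M x "- y"] submod_smult[of M "- 1" y] R_minus[OF R_one] by simp

lemma submod_R: "submod R R"
  unfolding submod_def using R_zero R_add R_mult by auto

lemma submod_val_ge: "submod R (val_ge a)"
  unfolding submod_def
proof (intro conjI ballI)
  fix r x assume "r \<in> R" "x \<in> val_ge a"
  moreover have "r \<in> val_ge 0" using v_nonneg \<open>r \<in> R\<close> by (auto simp: val_ge_iff)
  ultimately show "r * x \<in> val_ge a" using val_ge_mult[of r 0 x a] by simp
qed (simp_all add: val_ge_add val_ge_iff[of 0])

lemma submod_val_ring: "submod R (val_ring v)"
  unfolding val_ring_eq_val_ge by (rule submod_val_ge)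

lemma submod_Int: "submod R M \<Longrightarrow> submod R N \<Longrightarrow> submod R (M \<inter> N)"
  unfolding submod_def by auto

lemma submod_colon: "submod R (colon R X)"
  unfolding submod_def colon_def using R_zero R_add R_mult by (simp add: distrib_right mult.assoc)

lemma colon_antimono: "X \<subseteq> Y \<Longrightarrow> colon R Y \<subseteq> colon R X"
  unfolding colon_def by blast

lemma subset_colon: "X \<subseteq> R \<Longrightarrow> R \<subseteq> colon R X"
  unfolding colon_def using R_mult by blast

lemma colon_self: "colon R R = R"
  using subset_colon[of R] R_one unfolding colon_def by force

definition plus_scaled :: "'k set \<Rightarrow> 'k \<Rightarrow> 'k set \<Rightarrow> 'k set" where
  "plus_scaled N a M = {y + a * z | y z. y \<in> N \<and> z \<in> M}"

lemma submod_plus_scaled: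
  assumes "submod R N" "submod R M"
  shows "submod R (plus_scaled N a M)"
  unfolding submod_def
proof (intro conjI ballI)
  show "0 \<in> plus_scaled N a M"
    unfolding plus_scaled_def using assms submod_zero by force
next
  fix p q assume "p \<in> plus_scaled N a M" "q \<in> plus_scaled N a M"
  then obtain y z y' z' where "p = y + a * z" "q = y' + a * z'" "y \<in> N" "y' \<in> N" "z \<in> M" "z' \<in> M"
    unfolding plus_scaled_def by blast
  moreover have "p + q = (y + y') + a * (z + z')" if "p = y + a * z" "q = y' + a * z'"
    using that by (simp add: algebra_simps)
  ultimately show "p + q \<in> plus_scaled N a M"
    unfolding plus_scaled_def using assms submod_add by blast
next
  fix r p assume r: "r \<in> R" and "p \<in> plus_scaled N a M"
  then obtain y z where "p = y + a * z" "y \<in> N" "z \<in> M"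
    unfolding plus_scaled_def by blast
  moreover have "r * p = r * y + a * (r * z)" if "p = y + a * z"
    using that by (simp add: algebra_simps)
  ultimately show "r * p \<in> plus_scaled N a M"
    unfolding plus_scaled_def using assms r submod_smult by blast
qed

lemma subset_plus_scaled: "0 \<in> M \<Longrightarrow> N \<subseteq> plus_scaled N a M"
  unfolding plus_scaled_def by force

lemma scaled_mem_plus_scaled: "0 \<in> N \<Longrightarrow> z \<in> M \<Longrightarrow> a * z \<in> plus_scaled N a M"
  unfolding plus_scaled_def by force

lemma plus_scaled_subset:
  "submod R P \<Longrightarrow> N \<subseteq> P \<Longrightarrow> \<forall>z\<in>M. a * z \<in> P \<Longrightarrow> plus_scaled N a M \<subseteq> P"
  unfolding plus_scaled_def using submod_add by blast

text \<open>Induction on \<open>a - v z\<close>: residual rationality lets one subtract from \<open>z\<close> an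
  \<open>R\<close>-multiple of an element of \<open>N\<close> of the same value, which raises the value.\<close>

lemma subset_if_vals_subset:
  assumes N: "submod R N" and N': "submod R N'" and "N \<subseteq> N'" and "N' \<subseteq> val_ring v"
    and "val_ge a \<subseteq> N" and vals: "vals v N' \<subseteq> vals v N"
  shows "N' \<subseteq> N"
proof
  fix z assume "z \<in> N'"
  then show "z \<in> N"
  proof (induction "nat (a - v z)" arbitrary: z rule: less_induct)
    case (less z)
    show ?case
    proof (cases "z \<in> val_ge a")
      case False
      then have z: "z \<noteq> 0" "v z < a" unfolding val_ge_iff by auto
      have "nat (v z) \<in> vals v N" using valsI[OF less.prems z(1)] vals by blast
      then obtain w where w: "w \<in> N" "w \<noteq> 0" "nat (v w) = nat (v z)" by (rule valsE)
      moreover have "z \<in> val_ring v" "w \<in> val_ring v" using less.prems w(1) assms(3,4) by blast+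
      ultimately have "v z = v w" using z(1) by (simp add: val_ring_iff eq_nat_nat_iff)
      then obtain b where b: "b \<in> R" "z - b * w \<in> val_ge (v w + 1)"
        using residue_approximation[OF w(2) z(1)] by blast
      have "z - b * w \<in> N'"
        using w(1) assms(3) by (intro submod_diff[OF N' less.prems] submod_smult[OF N' b(1)]) blast
      moreover have "z - b * w = 0 \<or> nat (a - v (z - b * w)) < nat (a - v z)"
        using b(2) \<open>v z = v w\<close> z(2) unfolding val_ge_iff zless_nat_conj by linarith
      ultimately have "z - b * w \<in> N"
        using less.hyps[of "z - b * w"] submod_zero[OF N] by (cases "z - b * w = 0") auto
      then have "(z - b * w) + b * w \<in> N" using submod_add[OF N] submod_smult[OF N b(1) w(1)]
        by blast
      then show ?thesis by simp
    qed (use assms(5) in blast)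
  qed
qed

lemma vals_strict_mono:
  assumes "submod R N" "submod R N'" "N \<subset> N'" "N' \<subseteq> val_ring v" "val_ge a \<subseteq> N"
  shows "vals v N \<subset> vals v N'"
proof -
  have "\<not> vals v N' \<subseteq> vals v N"
    using subset_if_vals_subset[OF assms(1,2) _ assms(4,5)] assms(3) by blast
  then show ?thesis using vals_mono[of N N'] assms(3) by blast
qed

definition chain_lengths :: "'k set \<Rightarrow> 'k set \<Rightarrow> nat set" where
  "chain_lengths N M = {n. \<exists>f :: nat \<Rightarrow> 'k set. f 0 = N \<and> f n = M \<and>
     (\<forall>i<n. f i \<subset> f (Suc i)) \<and> (\<forall>i\<le>n. submod R (f i))}"

lemma chain_length_le_card_vals:
  assumes "submod R N" "M \<subseteq> val_ring v" "val_ge (int a) \<subseteq> N" "n \<in> chain_lengths N M"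
  shows "n \<le> card (vals v M - vals v N)"
proof -
  obtain f where f: "f 0 = N" "f n = M" "\<forall>i<n. f i \<subset> f (Suc i)" "\<forall>i\<le>n. submod R (f i)"
    using assms(4) unfolding chain_lengths_def by blast
  have "j \<le> card (vals v (f j) - vals v N)" if "j \<le> n" for j
    using that
  proof (induction j)
    case (Suc j)
    have sub: "N \<subseteq> f j" "f (Suc j) \<subseteq> M"
      using strict_chain_subset[OF f(3), of 0 j] strict_chain_subset[OF f(3), of "Suc j" n]
        f(1,2) Suc.prems
      by auto
    have "vals v (f j) \<subset> vals v (f (Suc j))"
      using vals_strict_mono[of "f j" "f (Suc j)" "int a"] f(3,4) sub assms(2,3) Suc.prems by auto
    moreover have "vals v N \<subseteq> vals v (f j)" using vals_mono[OF sub(1)] .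
    ultimately have "vals v (f j) - vals v N \<subset> vals v (f (Suc j)) - vals v N" by blast
    then have "card (vals v (f j) - vals v N) < card (vals v (f (Suc j)) - vals v N)"
      using finite_vals_diff[OF assms(3)] by (rule psubset_card_mono[rotated])
    then show ?case using Suc by simp
  qed simp
  then show ?thesis using f(2) by blast
qed

lemma vals_plus_val_ge_subset:
  assumes "W \<subseteq> val_ge (int d)"
  shows "vals v (plus_scaled N 1 W) \<subseteq> vals v N \<union> {d..}"
proof
  fix g assume "g \<in> vals v (plus_scaled N 1 W)"
  then obtain u where u: "u \<in> plus_scaled N 1 W" "u \<noteq> 0" "nat (v u) = g" by (rule valsE)
  then obtain y w where yw: "u = y + w" "y \<in> N" "w \<in> val_ge (int d)"
    using assms unfolding plus_scaled_def by auto
  from u(2) yw(3) show "g \<in> vals v N \<union> {d..}"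
    unfolding yw(1)
  proof (cases rule: v_add_cases)
    case 1
    then show ?thesis using valsI[OF yw(2)] u(3) yw(1) by simp
  next
    case 2
    then have "d \<le> g" using u(3) yw(1) by (simp add: le_nat_iff)
    then show ?thesis by simp
  qed
qed

lemma vals_diff_remove_max:
  assumes N: "submod R N" and M: "submod R M" "N \<subseteq> M" "M \<subseteq> val_ring v"
    and d: "d \<in> vals v M - vals v N" and d_max: "\<forall>g \<in> vals v M - vals v N. g \<le> d"
  defines "N' \<equiv> plus_scaled N 1 (M \<inter> val_ge (int d))"
  shows "submod R N'" "N \<subset> N'" "N' \<subseteq> M" "vals v M - vals v N' = (vals v M - vals v N) - {d}"
proof -
  show sN': "submod R N'"
    unfolding N'_def by (intro submod_plus_scaled submod_Int N M submod_val_ge)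
  show N'M: "N' \<subseteq> M"
    unfolding N'_def using plus_scaled_subset[OF M(1) M(2)] by auto
  have NN': "N \<subseteq> N'" unfolding N'_def using submod_zero[OF M(1)]
    by (intro subset_plus_scaled) (simp add: val_ge_iff)
  have "d \<in> vals v M" using d by simp
  then obtain z where z: "z \<in> M" "z \<noteq> 0" "nat (v z) = d" by (rule valsE)
  then have "v z = int d" using M(3) val_ring_iff by force
  then have zN': "z \<in> N'" unfolding N'_def
    using scaled_mem_plus_scaled[OF submod_zero[OF N], of z "M \<inter> val_ge (int d)" 1] z(1)
    by (simp add: val_ge_iff)
  have dN': "d \<in> vals v N'" using valsI[OF zN' z(2)] z(3) by simp
  then show "N \<subset> N'" using NN' d by auto
  have "g \<notin> vals v N'" if "g \<in> vals v M - vals v N" "g < d" for g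
    using vals_plus_val_ge_subset[of "M \<inter> val_ge (int d)" d N] that unfolding N'_def by auto
  moreover have "g < d" if "g \<in> (vals v M - vals v N) - {d}" for g
    using that d_max by (simp add: order.not_eq_order_implies_strict)
  ultimately have "(vals v M - vals v N) - {d} \<subseteq> vals v M - vals v N'" by blast
  moreover have "vals v M - vals v N' \<subseteq> (vals v M - vals v N) - {d}"
    using vals_mono[OF NN'] dN' by blast
  ultimately show "vals v M - vals v N' = (vals v M - vals v N) - {d}"
    by (rule subset_antisym[rotated])
qed

lemma chain_lengths_refl: "submod R M \<Longrightarrow> 0 \<in> chain_lengths M M"
  unfolding chain_lengths_def by (intro CollectI exI[of _ "\<lambda>_. M"]) simp

lemma chain_lengths_Suc:
  assumes "submod R N" "N \<subset> N'" "m \<in> chain_lengths N' M"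
  shows "Suc m \<in> chain_lengths N M"
proof -
  obtain f where f: "f 0 = N'" "f m = M" "\<forall>i<m. f i \<subset> f (Suc i)" "\<forall>i\<le>m. submod R (f i)"
    using assms(3) unfolding chain_lengths_def by blast
  define g where "g i = (if i = 0 then N else f (i - 1))" for i
  have "\<forall>i<Suc m. g i \<subset> g (Suc i)"
  proof (intro allI impI)
    fix i assume "i < Suc m"
    then show "g i \<subset> g (Suc i)" using f(1,3) assms(2) by (cases i) (auto simp: g_def)
  qed
  moreover have "\<forall>i\<le>Suc m. submod R (g i)" using f(4) assms(1) by (auto simp: g_def)
  ultimately show ?thesis using f(2) unfolding chain_lengths_def
    by (intro CollectI exI[of _ g]) (simp add: g_def)
qed

lemma card_vals_in_chain_lengths:
  assumes M: "submod R M" "M \<subseteq> val_ring v"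
  shows "submod R N \<Longrightarrow> N \<subseteq> M \<Longrightarrow> val_ge (int a) \<subseteq> N
    \<Longrightarrow> card (vals v M - vals v N) \<in> chain_lengths N M"
proof (induction "card (vals v M - vals v N)" arbitrary: N)
  case 0
  then have "vals v M \<subseteq> vals v N" using finite_vals_diff[OF "0.prems"(3), of M] by simp
  then have "N = M" using subset_if_vals_subset[OF "0.prems"(1) M(1) "0.prems"(2) M(2) "0.prems"(3)]
      "0.prems"(2) by blast
  then show ?case using "0.hyps" chain_lengths_refl[OF M(1)] by simp
next
  case (Suc m N)
  let ?D = "vals v M - vals v N"
  have "finite ?D" using finite_vals_diff[OF Suc.prems(3)] .
  moreover have "?D \<noteq> {}" using Suc.hyps(2) by (metis card.empty Zero_not_Suc)
  ultimately obtain d where d: "d \<in> ?D" "\<forall>g\<in>?D. g \<le> d" using Max_in Max_ge by blast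
  define N' where "N' = plus_scaled N 1 (M \<inter> val_ge (int d))"
  note N' = vals_diff_remove_max[OF Suc.prems(1) M(1) Suc.prems(2) M(2) d, folded N'_def]
  have "m = card (vals v M - vals v N')"
    using N'(4) Suc.hyps(2) d(1) \<open>finite ?D\<close> by simp
  then have "m \<in> chain_lengths N' M"
    using Suc.hyps(1) N'(1,2,3) Suc.prems(3) by blast
  then show ?case using chain_lengths_Suc[OF Suc.prems(1) N'(2)] Suc.hyps(2) by metis
qed

lemma ell_eq_card_vals:
  assumes "submod R N" "submod R M" "N \<subseteq> M" "M \<subseteq> val_ring v" "val_ge (int a) \<subseteq> N"
  shows "ell R N M = card (vals v M - vals v N)" "ell R N M \<in> chain_lengths N M"
proof -
  have "card (vals v M - vals v N) \<in> chain_lengths N M"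
    using card_vals_in_chain_lengths assms by blast
  moreover have "\<forall>n \<in> chain_lengths N M. n \<le> card (vals v M - vals v N)"
    using chain_length_le_card_vals assms(1,4,5) by blast
  ultimately have "Sup (chain_lengths N M) = card (vals v M - vals v N)"
    by (intro cSup_eq_maximum) auto
  moreover have "ell R N M = Sup (chain_lengths N M)"
    unfolding ell_def chain_lengths_def ..
  ultimately show "ell R N M = card (vals v M - vals v N)" "ell R N M \<in> chain_lengths N M"
    using \<open>card (vals v M - vals v N) \<in> chain_lengths N M\<close> by simp_all
qed

lemma chain_lengths_plus_scaled:
  assumes N1: "submod R N1" and N2: "submod R N2" and "submod R M1"
    and maps: "\<forall>z\<in>N1. u * z \<in> N2" and reflects: "\<forall>z\<in>M1. u * z \<in> N2 \<longrightarrow> z \<in> N1"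
    and "n \<in> chain_lengths N1 M1"
  shows "n \<in> chain_lengths N2 (plus_scaled N2 u M1)"
proof -
  obtain f where f: "f 0 = N1" "f n = M1" "\<forall>i<n. f i \<subset> f (Suc i)" "\<forall>i\<le>n. submod R (f i)"
    using assms(6) unfolding chain_lengths_def by blast
  define g where "g j = plus_scaled N2 u (f j)" for j
  have "g 0 = N2"
    using plus_scaled_subset[OF N2 order_refl maps] subset_plus_scaled[OF submod_zero[OF N1]]
    unfolding g_def f(1) by blast
  moreover have "g i \<subset> g (Suc i)" if i: "i < n" for i
  proof -
    have fi: "f i \<subseteq> f (Suc i)" "N1 \<subseteq> f i" "f (Suc i) \<subseteq> M1"
      "submod R (f i)" "submod R (f (Suc i))"
      using f strict_chain_subset[OF f(3), of 0 i] strict_chain_subset[OF f(3), of "Suc i" n] i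
      by auto
    obtain z where z: "z \<in> f (Suc i)" "z \<notin> f i" using f(3) i by blast
    have "u * z \<notin> g i"
    proof
      assume "u * z \<in> g i"
      then obtain y z' where yz: "u * z = y + u * z'" "y \<in> N2" "z' \<in> f i"
        unfolding g_def plus_scaled_def by blast
      have "z - z' \<in> M1" using submod_diff[OF fi(5) z(1)] fi(1,3) yz(3) by blast
      moreover have "u * (z - z') \<in> N2" using yz(1,2) by (simp add: algebra_simps)
      ultimately have "z - z' \<in> f i" using reflects fi(2) by blast
      then have "(z - z') + z' \<in> f i" using submod_add[OF fi(4) _ yz(3)] by blast
      then show False using z(2) by simp
    qed
    moreover have "u * z \<in> g (Suc i)" unfolding g_def
      using scaled_mem_plus_scaled[OF submod_zero[OF N2] z(1)] .
    moreover have "g i \<subseteq> g (Suc i)" using fi(1) unfolding g_def plus_scaled_def by blast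
    ultimately show ?thesis by blast
  qed
  moreover have "\<forall>i\<le>n. submod R (g i)" using f(4) submod_plus_scaled[OF N2] unfolding g_def by blast
  ultimately show ?thesis using f(2) unfolding chain_lengths_def
    by (intro CollectI exI[of _ g]) (simp add: g_def)
qed

lemma ell_le_if_scaled_embedding:
  assumes N1: "submod R N1" "submod R M1" "N1 \<subseteq> M1" "M1 \<subseteq> val_ring v" "val_ge (int a) \<subseteq> N1"
    and N2: "submod R N2" "submod R M2" "N2 \<subseteq> M2" "M2 \<subseteq> val_ring v" "val_ge (int b) \<subseteq> N2"
    and "\<forall>z\<in>N1. u * z \<in> N2" "\<forall>z\<in>M1. u * z \<in> M2" "\<forall>z\<in>M1. u * z \<in> N2 \<longrightarrow> z \<in> N1"
  shows "ell R N1 M1 \<le> ell R N2 M2"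
proof -
  let ?P = "plus_scaled N2 u M1"
  have P: "?P \<subseteq> M2" using plus_scaled_subset[OF N2(2,3)] assms(12) by blast
  have "ell R N1 M1 \<in> chain_lengths N2 ?P"
    using chain_lengths_plus_scaled[OF N1(1) N2(1) N1(2) assms(11,13)] ell_eq_card_vals(2)[OF N1]
    by blast
  then have "ell R N1 M1 \<le> card (vals v ?P - vals v N2)"
    using chain_length_le_card_vals[OF N2(1) _ N2(5)] P N2(4) by blast
  also have "\<dots> \<le> card (vals v M2 - vals v N2)"
    using vals_mono[OF P] finite_vals_diff[OF N2(5)] by (intro card_mono) auto
  also have "\<dots> = ell R N2 M2" using ell_eq_card_vals(1)[OF N2] by simp
  finally show ?thesis .
qed

end

section \<open>The value semigroup and the invariants of \<open>R\<close>\<close>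

locale analytically_irreducible_ring = valued_subring v R for v :: "'k::field \<Rightarrow> int" and R +
  assumes quotient_field: "quotient_field_of R"
    and finite_integral_closure: "finite_module R (val_ring v)"
    and local: "local_ring R"
    and not_regular: "\<not> regular_dim_one R"
begin

lemma common_denominator: "\<exists>d\<in>R. d \<noteq> 0 \<and> (\<forall>z\<in>val_ring v. d * z \<in> R)"
proof -
  obtain G where G: "finite G" "val_ring v = lin_span R G"
    using finite_integral_closure unfolding finite_module_def by blast
  have "\<exists>b. b \<in> R \<and> b \<noteq> 0 \<and> g * b \<in> R" for g
  proof -
    obtain a b where "a \<in> R" "b \<in> R" "b \<noteq> 0" "g = a / b"
      using quotient_field unfolding quotient_field_of_def by blast
    then show ?thesis by (intro exI[of _ b]) simp
  qed
  then obtain den where den: "\<And>g. den g \<in> R" "\<And>g. den g \<noteq> 0" "\<And>g. g * den g \<in> R" by metis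
  define d where "d = prod den G"
  have dg: "d * g \<in> R" if "g \<in> G" for g
  proof -
    have "d = den g * prod den (G - {g})" unfolding d_def using G(1) that by (simp add: prod.remove)
    then have eq: "d * g = (g * den g) * prod den (G - {g})" by (simp only: ac_simps)
    have "prod den (G - {g}) \<in> R" using G(1) den(1) by (intro R_prod) simp_all
    then show ?thesis unfolding eq by (rule R_mult[OF den(3)])
  qed
  have "d * z \<in> R" if "z \<in> val_ring v" for z
  proof -
    have "z \<in> lin_span R G" using that G(2) by simp
    then obtain f where f: "z = (\<Sum>g\<in>G. f g * g)" "\<forall>g\<in>G. f g \<in> R"
      unfolding lin_span_def by blast
    have "d * z = (\<Sum>g\<in>G. f g * (d * g))" unfolding f(1)
      by (simp add: sum_distrib_left algebra_simps)
    moreover have "f g * (d * g) \<in> R" if "g \<in> G" for g using R_mult f(2) dg that by blast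
    ultimately show ?thesis using R_sum[OF G(1)] by simp
  qed
  moreover have "d \<in> R" "d \<noteq> 0" using R_prod[OF G(1)] den(1,2) G(1) unfolding d_def by auto
  ultimately show ?thesis by blast
qed

lemma val_ge_subset_exists:
  obtains a where "val_ge (int a) \<subseteq> R"
proof -
  obtain d where d: "d \<in> R" "d \<noteq> 0" "\<forall>z\<in>val_ring v. d * z \<in> R"
    using common_denominator by blast
  have "val_ge (v d) \<subseteq> R"
  proof
    fix w assume w: "w \<in> val_ge (v d)"
    have "w / d \<in> val_ring v"
      using w v_divide[of w d] d(2) by (cases "w = 0") (auto simp: val_ge_iff val_ring_iff)
    then have "d * (w / d) \<in> R" using d(3) by blast
    then show "w \<in> R" using d(2) by simp
  qed
  then show thesis using that[of "nat (v d)"] v_nonneg[OF d(1,2)] by simp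
qed

lemma mem_vR_iff: "g \<in> vR R v \<longleftrightarrow> (\<exists>a\<in>R. a \<noteq> 0 \<and> v a = int g)"
proof
  assume "g \<in> vR R v"
  then obtain a where "a \<in> R" "a \<noteq> 0" "nat (v a) = g" unfolding vR_def by (rule valsE)
  moreover have "0 \<le> v a" using v_nonneg \<open>a \<in> R\<close> \<open>a \<noteq> 0\<close> by blast
  ultimately show "\<exists>a\<in>R. a \<noteq> 0 \<and> v a = int g" by auto
next
  assume "\<exists>a\<in>R. a \<noteq> 0 \<and> v a = int g"
  then obtain a where "a \<in> R" "a \<noteq> 0" "v a = int g" by blast
  then show "g \<in> vR R v" using valsI[of a R] unfolding vR_def by simp
qed

lemma zero_mem_vR: "0 \<in> vR R v"
  unfolding mem_vR_iff using R_one v_one by (intro bexI[of _ 1]) simp_all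

lemma add_mem_vR:
  assumes "g \<in> vR R v" "h \<in> vR R v"
  shows "g + h \<in> vR R v"
proof -
  obtain a b where "a \<in> R" "a \<noteq> 0" "v a = int g" "b \<in> R" "b \<noteq> 0" "v b = int h"
    using assms unfolding mem_vR_iff by blast
  then show ?thesis unfolding mem_vR_iff using R_mult v_mult by (intro bexI[of _ "a * b"]) simp_all
qed

lemma mem_vR_if_val_ge_subset: "val_ge (int a) \<subseteq> R \<Longrightarrow> a \<le> g \<Longrightarrow> g \<in> vR R v"
  unfolding vR_def by (rule mem_vals_if_val_ge_subset)

lemma conductor: "cond_c R v \<in> vR R v" "cond_c R v \<le> m \<Longrightarrow> m \<in> vR R v"
proof -
  obtain a where "val_ge (int a) \<subseteq> R" by (rule val_ge_subset_exists)
  then have "\<exists>c. c \<in> vR R v \<and> (\<forall>m\<ge>c. m \<in> vR R v)" using mem_vR_if_val_ge_subset by blast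
  then have "cond_c R v \<in> vR R v \<and> (\<forall>m\<ge>cond_c R v. m \<in> vR R v)"
    unfolding cond_c_def by (rule LeastI_ex)
  then show "cond_c R v \<in> vR R v" "cond_c R v \<le> m \<Longrightarrow> m \<in> vR R v" by simp_all
qed

lemma conductor_le: "c' \<in> vR R v \<Longrightarrow> (\<And>m. c' \<le> m \<Longrightarrow> m \<in> vR R v) \<Longrightarrow> cond_c R v \<le> c'"
  unfolding cond_c_def by (rule Least_le) blast

lemma conductor_le_if_mult_val_ge:
  assumes "z \<noteq> 0" "\<And>w. w \<in> val_ge (int a) \<Longrightarrow> z * w \<in> R"
  shows "int (cond_c R v) \<le> v z + int a"
proof -
  have mem: "m \<in> vR R v" if "v z + int a \<le> int m" for m
  proof -
    define w where "w = uniformizer ^ nat (int m - v z)"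
    have "w \<in> val_ge (int a)" "w \<noteq> 0" "v w = int m - v z"
      using uniformizer_power that unfolding w_def by (auto simp: val_ge_iff)
    then show ?thesis using assms v_mult[of z w] unfolding mem_vR_iff
      by (intro bexI[of _ "z * w"]) auto
  qed
  have "z * uniformizer ^ a \<in> R" using assms(2) uniformizer_power by (simp add: val_ge_iff)
  then have nonneg: "0 \<le> v z + int a"
    using v_nonneg[of "z * uniformizer ^ a"] v_mult[OF assms(1)] uniformizer_power assms(1) by simp
  then have "cond_c R v \<le> nat (v z + int a)" using mem by (intro conductor_le) auto
  then show ?thesis using nonneg by linarith
qed

lemma val_ge_conductor_subset: "val_ge (int (cond_c R v)) \<subseteq> R"
proof -
  obtain a where a: "val_ge (int a) \<subseteq> R" by (rule val_ge_subset_exists)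
  define P where "P = plus_scaled R 1 (val_ge (int (cond_c R v)))"
  have "\<forall>z\<in>val_ge (int (cond_c R v)). 1 * z \<in> val_ring v"
    using val_ge_antimono[of 0 "int (cond_c R v)"] by (auto simp: val_ring_eq_val_ge)
  then have P: "submod R P" "R \<subseteq> P" "P \<subseteq> val_ring v"
    unfolding P_def using submod_plus_scaled[OF submod_R submod_val_ge]
      subset_plus_scaled[of "val_ge _" R 1] plus_scaled_subset[OF submod_val_ring subset_val_ring]
    by (auto simp: val_ge_iff)
  have "vals v P \<subseteq> vals v R \<union> {cond_c R v..}"
    unfolding P_def by (rule vals_plus_val_ge_subset) simp
  moreover have "{cond_c R v..} \<subseteq> vals v R" using conductor(2) unfolding vR_def by auto
  ultimately have "vals v P \<subseteq> vals v R" by blast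
  then have "P \<subseteq> R" using subset_if_vals_subset[OF submod_R P a] by blast
  moreover have "val_ge (int (cond_c R v)) \<subseteq> P"
    unfolding P_def using scaled_mem_plus_scaled[OF R_zero, of _ _ 1] by force
  ultimately show ?thesis by blast
qed

lemma unit_value: "a \<in> R \<Longrightarrow> b \<in> R \<Longrightarrow> a * b = 1 \<Longrightarrow> v a = 0"
  using v_mult[of a b] v_one v_nonneg[of a] v_nonneg[of b] by force

lemma max_ideal_eq: "max_ideal R = {a \<in> R. a = 0 \<or> 0 < v a}"
proof (intro equalityI subsetI)
  fix a assume "a \<in> {a \<in> R. a = 0 \<or> 0 < v a}"
  then show "a \<in> max_ideal R" unfolding max_ideal_def using unit_value by fastforce
next
  fix a assume am: "a \<in> max_ideal R"
  then have aR: "a \<in> R" unfolding max_ideal_def by simp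
  have ideal: "is_ideal R (max_ideal R)" using local unfolding local_ring_def .
  have False if a0: "a \<noteq> 0" "v a = 0"
  proof -
    obtain b where b: "b \<in> R" "1 - b * a \<in> val_ge 1"
      using residue_approximation[OF a0(1), of 1] a0(2) v_one by auto
    have ba: "b * a \<in> max_ideal R" using ideal am b(1) unfolding is_ideal_def by blast
    have "1 - b * a \<notin> max_ideal R"
    proof
      assume "1 - b * a \<in> max_ideal R"
      then have "(1 - b * a) + b * a \<in> max_ideal R" using ideal ba unfolding is_ideal_def by blast
      then show False using R_one unfolding max_ideal_def by auto
    qed
    moreover have "1 - b * a \<in> R" using R_diff[OF R_one R_mult[OF b(1) aR]] .
    ultimately obtain u where "u \<in> R" "(1 - b * a) * u = 1" unfolding max_ideal_def by blast
    then have "v (1 - b * a) = 0" "1 - b * a \<noteq> 0"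
      using unit_value \<open>1 - b * a \<in> R\<close> by auto
    then show False using b(2) by (simp add: val_ge_iff)
  qed
  then show "a \<in> {a \<in> R. a = 0 \<or> 0 < v a}" using aR v_nonneg[OF aR] by force
qed

text \<open>If \<open>c = 0\<close> then \<open>R = Rbar\<close>, whose maximal ideal is generated by a uniformizer.\<close>

lemma conductor_pos: "0 < cond_c R v"
proof (rule ccontr)
  assume "\<not> 0 < cond_c R v"
  then have VR: "val_ring v \<subseteq> R" using val_ge_conductor_subset by (simp add: val_ring_eq_val_ge)
  define t where "t = uniformizer"
  have t: "t \<in> val_ring v" "t \<noteq> 0" "v t = 1"
    using uniformizer_power[of 1] unfolding t_def by (simp_all add: val_ring_iff)
  have "max_ideal R = {t * a | a. a \<in> R}"
  proof (intro equalityI subsetI)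
    fix x assume "x \<in> max_ideal R"
    then have x: "x \<in> R" "x = 0 \<or> 0 < v x" by (auto simp: max_ideal_eq)
    have "x / t \<in> val_ring v"
    proof (cases "x = 0")
      case False
      then have "v (x / t) = v x - 1" using v_divide[of x t] t by simp
      then show ?thesis using x(2) False by (simp add: val_ring_iff)
    qed (simp add: val_ring_iff)
    then have "x / t \<in> R" using VR by blast
    then show "x \<in> {t * a | a. a \<in> R}" using t(2) by (intro CollectI exI[of _ "x / t"]) simp
  next
    fix x assume "x \<in> {t * a | a. a \<in> R}"
    then obtain a where a: "a \<in> R" "x = t * a" by blast
    then have "x \<in> R" using R_mult t(1) VR by blast
    moreover have "x = 0 \<or> 0 < v x"
      using a v_mult[OF t(2), of a] t(3) v_nonneg[OF a(1)] by (cases "a = 0") auto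
    ultimately show "x \<in> max_ideal R" by (simp add: max_ideal_eq)
  qed
  then show False using not_regular t(1) VR unfolding regular_dim_one_def by blast
qed

lemma conductor_pred_notin: "cond_c R v - 1 \<notin> vR R v"
proof
  assume pred: "cond_c R v - 1 \<in> vR R v"
  moreover have "m \<in> vR R v" if "cond_c R v - 1 \<le> m" for m
    using that pred conductor(2) by (cases "m = cond_c R v - 1") auto
  ultimately have "cond_c R v \<le> cond_c R v - 1" by (rule conductor_le)
  then show False using conductor_pos by simp
qed

lemma multiplicity: "mult_e R v \<in> vR R v" "0 < mult_e R v"
proof -
  have "cond_c R v \<in> vR R v \<and> 0 < cond_c R v" using conductor(1) conductor_pos by simp
  then have "mult_e R v \<in> vR R v \<and> 0 < mult_e R v" unfolding mult_e_def by (rule LeastI)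
  then show "mult_e R v \<in> vR R v" "0 < mult_e R v" by simp_all
qed

lemma multiplicity_le: "y \<in> vR R v \<Longrightarrow> 0 < y \<Longrightarrow> mult_e R v \<le> y"
  unfolding mult_e_def by (rule Least_le) simp

sublocale vs: numerical_semigroup "vR R v" "cond_c R v" "mult_e R v"
  using zero_mem_vR add_mem_vR conductor_pos conductor(2) conductor_pred_notin
    multiplicity multiplicity_le
  by unfold_locales auto

lemma multiplicity_le_value: "w \<in> max_ideal R \<Longrightarrow> w \<noteq> 0 \<Longrightarrow> int (mult_e R v) \<le> v w"
proof -
  assume w: "w \<in> max_ideal R" "w \<noteq> 0"
  then have "w \<in> R" "0 < v w" by (auto simp: max_ideal_eq)
  then have "nat (v w) \<in> vR R v" "0 < nat (v w)" using valsI[OF _ w(2)] unfolding vR_def by auto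
  then show ?thesis using multiplicity_le by fastforce
qed

lemma colon_subset_val_ring:
  assumes "val_ge (int (cond_c R v)) \<subseteq> X"
  shows "colon R X \<subseteq> val_ring v"
proof
  fix z assume z: "z \<in> colon R X"
  show "z \<in> val_ring v"
  proof (cases "z = 0")
    case False
    have "z * w \<in> R" if "w \<in> val_ge (int (cond_c R v))" for w
      using z assms that unfolding colon_def by blast
    then have "int (cond_c R v) \<le> v z + int (cond_c R v)"
      by (rule conductor_le_if_mult_val_ge[OF False])
    then show ?thesis by (simp add: val_ring_iff)
  qed (simp add: val_ring_iff)
qed

lemma colon_val_ring: "colon R (val_ring v) = val_ge (int (cond_c R v))"
proof (intro equalityI subsetI)
  fix z assume z: "z \<in> colon R (val_ring v)"
  show "z \<in> val_ge (int (cond_c R v))"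
  proof (cases "z = 0")
    case False
    have "z * w \<in> R" if "w \<in> val_ge (int 0)" for w
      using z that unfolding colon_def val_ring_eq_val_ge by simp
    then have "int (cond_c R v) \<le> v z + int 0" by (rule conductor_le_if_mult_val_ge[OF False])
    then show ?thesis by (simp add: val_ge_iff)
  qed (simp add: val_ge_iff)
next
  fix z assume "z \<in> val_ge (int (cond_c R v))"
  then have "z * w \<in> R" if "w \<in> val_ge 0" for w
    using val_ge_mult[of z _ w 0] that val_ge_conductor_subset by auto
  then show "z \<in> colon R (val_ring v)" unfolding colon_def val_ring_eq_val_ge by blast
qed

lemma conductor_subset_max_ideal: "val_ge (int (cond_c R v)) \<subseteq> max_ideal R"
proof
  fix z assume "z \<in> val_ge (int (cond_c R v))"
  then show "z \<in> max_ideal R"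
    using val_ge_conductor_subset conductor_pos unfolding max_ideal_eq by (auto simp: val_ge_iff)
qed

lemma delta_eq: "delta R v = card ({..<cond_c R v} - vR R v)"
proof -
  have "delta R v = card (vals v (val_ring v) - vals v R)"
    unfolding delta_def using val_ge_conductor_subset
    by (intro ell_eq_card_vals(1) submod_R submod_val_ring subset_val_ring order_refl)
  also have "vals v (val_ring v) - vals v R = {..<cond_c R v} - vR R v"
    using vals_val_ring conductor(2) not_less unfolding vR_def by blast
  finally show ?thesis .
qed

lemma nnum_eq: "nnum R v = int (card (vR R v \<inter> {..<cond_c R v}))"
proof -
  have "card (vR R v \<inter> {..<cond_c R v}) \<le> cond_c R v"
    using card_mono[of "{..<cond_c R v}" "vR R v \<inter> {..<cond_c R v}"] by simp
  then show ?thesis unfolding nnum_def delta_eq vs.card_gaps by simp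
qed

lemma pnum_eq: "pnum R v = int (vs.steps_below_conductor 0)"
  unfolding pnum_def
proof (rule the_equality)
  show "int (cond_c R v) - int (mult_e R v) \<le> int (vs.steps_below_conductor 0) * int (mult_e R v)
    \<and> int (vs.steps_below_conductor 0) * int (mult_e R v) < int (cond_c R v)"
    using vs.steps_below_conductor[of 0] conductor_pos by (simp flip: of_nat_mult)
next
  fix p
  assume "int (cond_c R v) - int (mult_e R v) \<le> p * int (mult_e R v)
    \<and> p * int (mult_e R v) < int (cond_c R v)"
  then show "p = int (vs.steps_below_conductor 0)"
    using vs.steps_below_conductor_unique[of 0 p] conductor_pos by (simp add: algebra_simps)
qed

lemma lnum_eq:
  assumes "y < cond_c R v"
  shows "lnum R v y = int (vs.steps_below_conductor y)"
  unfolding lnum_def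
proof (rule the_equality)
  show "0 \<le> int (vs.steps_below_conductor y)
    \<and> int y + int (vs.steps_below_conductor y) * int (mult_e R v) < int (cond_c R v)
    \<and> int (cond_c R v) \<le> int y + (int (vs.steps_below_conductor y) + 1) * int (mult_e R v)"
    using vs.steps_below_conductor[OF assms] by (simp add: algebra_simps flip: of_nat_mult)
next
  fix l assume "0 \<le> l \<and> int y + l * int (mult_e R v) < int (cond_c R v)
    \<and> int (cond_c R v) \<le> int y + (l + 1) * int (mult_e R v)"
  then show "l = int (vs.steps_below_conductor y)"
    using vs.steps_below_conductor_unique[OF assms] by blast
qed

lemma sval_eq: "sval R v i = vs.element i"
  unfolding sval_def vs.element_def vs.rank_def ..

lemma i_zero_eq: "i_zero R v = vs.rank vs.window_start + 1"
  unfolding i_zero_def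
proof (rule the_equality)
  have "int (cond_c R v) - int (mult_e R v) \<le> int y \<longleftrightarrow> cond_c R v - mult_e R v \<le> y" for y
    using vs.multiplicity_le_conductor by linarith
  then have ws:
    "(LEAST y. y \<in> vR R v \<and> int (cond_c R v) - int (mult_e R v) \<le> int y) = vs.window_start"
    unfolding vs.window_start_def by simp
  have "vs.rank vs.window_start < card (vR R v \<inter> {..<cond_c R v})"
    using vs.rank_strict_mono[OF vs.window_start(1,3)] vs.rank_below_conductor by simp
  then show "1 \<le> vs.rank vs.window_start + 1 \<and> int (vs.rank vs.window_start + 1) \<le> nnum R v
      \<and> int (sval R v (vs.rank vs.window_start + 1 - 1))
        = int (LEAST y. y \<in> vR R v \<and> int (cond_c R v) - int (mult_e R v) \<le> int y)"
    unfolding ws nnum_eq sval_eq using vs.element_rank[OF vs.window_start(1)] by simp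
  fix i assume "1 \<le> i \<and> int i \<le> nnum R v \<and> int (sval R v (i - 1))
    = int (LEAST y. y \<in> vR R v \<and> int (cond_c R v) - int (mult_e R v) \<le> int y)"
  then have "1 \<le> i" "vs.element (i - 1) = vs.window_start" unfolding ws sval_eq by simp_all
  then show "i = vs.rank vs.window_start + 1" using vs.element(2)[of "i - 1"] by simp
qed

lemma rank_window_start_less: "vs.rank vs.window_start < vs.rank (cond_c R v)"
  using vs.rank_strict_mono[OF vs.window_start(1,3)] .

lemma setA_eq: "setA R v = {1..vs.rank vs.window_start}"
  using rank_window_start_less
  unfolding setA_def i_zero_eq nnum_eq vs.rank_below_conductor[symmetric] by auto

lemma Rsub_eq: "Rsub R v i = R \<inter> val_ge (int (vs.element i))"
  unfolding Rsub_def val_ge_def sval_eq by auto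

lemma colon_Rsub_0: "colon R (Rsub R v 0) = R"
proof -
  have "R \<inter> val_ge (int 0) = R" using v_nonneg by (force simp: val_ge_iff)
  then show ?thesis unfolding Rsub_eq vs.element_0 using colon_self by simp
qed

lemma colon_Rsub_mono: "i \<le> j \<Longrightarrow> colon R (Rsub R v i) \<subseteq> colon R (Rsub R v j)"
  using vs.element_mono val_ge_antimono unfolding Rsub_eq
  by (intro colon_antimono) (meson Int_mono of_nat_le_iff order_refl)

lemma colon_Rsub:
  assumes "i \<le> vs.rank (cond_c R v)"
  shows "submod R (colon R (Rsub R v i))" "R \<subseteq> colon R (Rsub R v i)"
    "colon R (Rsub R v i) \<subseteq> val_ring v" "val_ge (int (cond_c R v)) \<subseteq> colon R (Rsub R v i)"
proof -
  show "R \<subseteq> colon R (Rsub R v i)" by (rule subset_colon) (simp add: Rsub_eq)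
  then show "val_ge (int (cond_c R v)) \<subseteq> colon R (Rsub R v i)"
    using val_ge_conductor_subset by blast
  have "vs.element i \<le> cond_c R v"
    using vs.element_mono[OF assms] vs.element_rank[OF conductor(1)] by simp
  then have "val_ge (int (cond_c R v)) \<subseteq> Rsub R v i"
    unfolding Rsub_eq using val_ge_conductor_subset val_ge_antimono[of "int (vs.element i)"] by auto
  then show "colon R (Rsub R v i) \<subseteq> val_ring v" by (rule colon_subset_val_ring)
qed (rule submod_colon)

lemma rr_Suc:
  assumes "i < vs.rank (cond_c R v)"
  shows "rr R v (Suc i)
    = card (vals v (colon R (Rsub R v (Suc i))) - vals v (colon R (Rsub R v i)))"
proof -
  have "rr R v (Suc i) = ell R (colon R (Rsub R v i)) (colon R (Rsub R v (Suc i)))"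
    unfolding rr_def by simp
  also have "\<dots> = card (vals v (colon R (Rsub R v (Suc i))) - vals v (colon R (Rsub R v i)))"
    using assms colon_Rsub[of i] colon_Rsub[of "Suc i"] colon_Rsub_mono[of i "Suc i"]
    by (intro ell_eq_card_vals(1)) auto
  finally show ?thesis .
qed

lemma sum_rr:
  "m \<le> vs.rank (cond_c R v) \<Longrightarrow> (\<Sum>i\<in>{1..m}. rr R v i) = card (vals v (colon R (Rsub R v m)) - vR R v)"
proof (induction m)
  case 0
  then show ?case unfolding colon_Rsub_0 vR_def by simp
next
  case (Suc m)
  let ?W = "\<lambda>i. vals v (colon R (Rsub R v i))"
  have sub: "vR R v \<subseteq> ?W m" "?W m \<subseteq> ?W (Suc m)"
    using vals_mono[OF colon_Rsub_mono[of 0 m]] vals_mono[OF colon_Rsub_mono[of m "Suc m"]]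
    unfolding colon_Rsub_0 vR_def by simp_all
  have fin: "finite (?W i - vR R v)" for i
    using finite_vals_diff[OF val_ge_conductor_subset] unfolding vR_def .
  have "card (?W (Suc m) - vR R v) = card (?W m - vR R v) + card (?W (Suc m) - ?W m)"
  proof -
    have "?W (Suc m) - vR R v = (?W m - vR R v) \<union> (?W (Suc m) - ?W m)" using sub by blast
    moreover have "finite (?W (Suc m) - ?W m)"
      using finite_subset[OF _ fin[of "Suc m"]] sub(1) by blast
    moreover have "(?W m - vR R v) \<inter> (?W (Suc m) - ?W m) = {}" by blast
    ultimately show ?thesis using fin[of m] by (simp add: card_Un_disjoint)
  qed
  then show ?case using Suc rr_Suc[of m] by simp
qed

lemma colon_max_ideal:
  "submod R (colon R (max_ideal R))" "R \<subseteq> colon R (max_ideal R)"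
  "colon R (max_ideal R) \<subseteq> val_ring v"
  using submod_colon subset_colon[of "max_ideal R"]
    colon_subset_val_ring[OF conductor_subset_max_ideal]
  by (auto simp: max_ideal_eq)

lemma type_r_eq: "type_r R = card (vals v (colon R (max_ideal R)) - vR R v)"
  unfolding type_r_def vR_def
  using colon_max_ideal val_ge_conductor_subset by (intro ell_eq_card_vals(1) submod_R)

lemma power_uniformizer_mem_colon:
  assumes "\<And>w. w \<in> X \<Longrightarrow> w \<noteq> 0 \<Longrightarrow> int (cond_c R v) \<le> int g + v w"
  shows "uniformizer ^ g \<in> colon R X"
  unfolding colon_def
proof (intro CollectI ballI)
  fix w assume "w \<in> X"
  then have "uniformizer ^ g * w \<in> val_ge (int (cond_c R v))"
    using assms v_mult[OF uniformizer_power(1)] uniformizer_power(2)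
    by (cases "w = 0") (auto simp: val_ge_iff)
  then show "uniformizer ^ g * w \<in> R" using val_ge_conductor_subset by blast
qed

lemma gaps_subset_vals_colon:
  assumes "g \<notin> vR R v" "\<And>w. w \<in> X \<Longrightarrow> w \<noteq> 0 \<Longrightarrow> int (cond_c R v) \<le> int g + v w"
  shows "g \<in> vals v (colon R X) - vR R v"
  using valsI[OF power_uniformizer_mem_colon[OF assms(2)] uniformizer_power(1)]
    uniformizer_power(2) assms(1)
  by simp

lemma type_r_ge: "mult_e R v - card (vs.apery \<inter> {..<cond_c R v}) \<le> type_r R" "1 \<le> type_r R"
proof -
  let ?G = "{cond_c R v - mult_e R v..<cond_c R v} - vR R v"
  have "?G \<subseteq> vals v (colon R (max_ideal R)) - vR R v"
  proof
    fix g assume "g \<in> ?G"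
    then show "g \<in> vals v (colon R (max_ideal R)) - vR R v"
      using multiplicity_le_value vs.multiplicity_le_conductor
      by (intro gaps_subset_vals_colon) fastforce+
  qed
  then have G: "card ?G \<le> type_r R"
    unfolding type_r_eq using finite_vals_diff[OF val_ge_conductor_subset]
    by (intro card_mono) (auto simp: vR_def)
  have "card {cond_c R v - mult_e R v..<cond_c R v}
      = card ({cond_c R v - mult_e R v..<cond_c R v} \<inter> vR R v) + card ?G"
    by (rule card_Int_Diff) simp
  then have "card ?G = mult_e R v - card (vs.apery \<inter> {..<cond_c R v})"
    using vs.multiplicity_le_conductor vs.card_top_interval_below_conductor
    by (simp add: Int_commute)
  then show "mult_e R v - card (vs.apery \<inter> {..<cond_c R v}) \<le> type_r R" using G by simp
  have "cond_c R v - 1 \<in> ?G" using conductor_pos multiplicity(2) vs.conductor_pred_notin by auto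
  then have "0 < card ?G" by (auto simp: card_gt_0_iff)
  then show "1 \<le> type_r R" using G by simp
qed

lemma Rsub_SucI:
  assumes "a \<in> R" "a \<noteq> 0" "int (vs.element i) < v a"
  shows "a \<in> Rsub R v (Suc i)"
proof -
  have "nat (v a) \<in> vR R v" using valsI[OF assms(1,2)] unfolding vR_def .
  moreover have "vs.element i < nat (v a)" using assms(3) by linarith
  ultimately have "vs.element (Suc i) \<le> nat (v a)" using vs.element_le_next[of "Suc i"] by simp
  then show ?thesis using assms by (simp add: Rsub_eq val_ge_iff)
qed

lemma colon_Rsub_reflect:
  assumes u: "u \<in> R" "u \<noteq> 0" "v u = int (vs.element i)"
    and z: "z \<in> colon R (Rsub R v (Suc i))" "u * z \<in> R"
  shows "z \<in> colon R (Rsub R v i)"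
  unfolding colon_def
proof (intro CollectI ballI)
  have zRsub: "z * w \<in> R" if "w \<in> R" "w \<noteq> 0" "int (vs.element i) < v w" for w
    using z(1) Rsub_SucI[OF that] unfolding colon_def by blast
  fix w assume w: "w \<in> Rsub R v i"
  then have wR: "w \<in> R" "w = 0 \<or> int (vs.element i) \<le> v w" by (simp_all add: Rsub_eq val_ge_iff)
  show "z * w \<in> R"
  proof (cases "w = 0 \<or> int (vs.element i) < v w")
    case True
    then show ?thesis using zRsub[of w] wR(1) by (cases "w = 0") auto
  next
    case False
    then have "w \<noteq> 0" "v w = v u" using wR(2) u(3) by auto
    then obtain b where b: "b \<in> R" "w - b * u \<in> val_ge (v u + 1)"
      using residue_approximation[OF u(2)] by blast
    have "w - b * u \<in> R" using R_diff[OF wR(1) R_mult[OF b(1) u(1)]] .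
    then have "z * (w - b * u) \<in> R"
      using zRsub[of "w - b * u"] b(2) u(3) R_zero
      by (cases "w - b * u = 0") (auto simp: val_ge_iff)
    moreover have "z * w = b * (u * z) + z * (w - b * u)" by (simp add: algebra_simps)
    ultimately show ?thesis using R_add R_mult[OF b(1) z(2)] by simp
  qed
qed

text \<open>Multiplication by an element \<open>u\<close> of value \<open>s\<^sub>i\<close> embeds \<open>(R : R\<^sub>i\<^sub>+\<^sub>1)/(R : R\<^sub>i)\<close>
  into \<open>(R : m)/R\<close>.\<close>

lemma rr_le_type_r:
  assumes i: "i < vs.rank (cond_c R v)"
  shows "rr R v (Suc i) \<le> type_r R"
proof -
  obtain u where u: "u \<in> R" "u \<noteq> 0" "v u = int (vs.element i)"
    using vs.element(1) unfolding mem_vR_iff by blast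
  have "u \<in> Rsub R v i" using u by (simp add: Rsub_eq val_ge_iff)
  then have maps: "\<forall>z\<in>colon R (Rsub R v i). u * z \<in> R" unfolding colon_def
    by (simp add: mult.commute)
  have "u * z \<in> colon R (max_ideal R)" if "z \<in> colon R (Rsub R v (Suc i))" for z
    unfolding colon_def
  proof (intro CollectI ballI)
    fix w assume w: "w \<in> max_ideal R"
    show "u * z * w \<in> R"
    proof (cases "w = 0")
      case False
      then have "w \<in> R" "0 < v w" using w by (auto simp: max_ideal_eq)
      then have "u * w \<in> Rsub R v (Suc i)"
        using Rsub_SucI[OF R_mult[OF u(1)]] v_mult[OF u(2) False] u(2,3) False by simp
      then have "z * (u * w) \<in> R" using that unfolding colon_def by blast
      then show ?thesis by (simp add: algebra_simps)
    qed (simp add: R_zero)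
  qed
  then have "ell R (colon R (Rsub R v i)) (colon R (Rsub R v (Suc i)))
      \<le> ell R R (colon R (max_ideal R))"
    using colon_Rsub[of i] colon_Rsub[of "Suc i"] colon_Rsub_mono[of i "Suc i"] i colon_max_ideal
      val_ge_conductor_subset maps colon_Rsub_reflect[OF u]
    by (intro ell_le_if_scaled_embedding[of _ _ "cond_c R v" _ _ "cond_c R v" u] submod_R) auto
  then show ?thesis unfolding rr_def type_r_def by simp
qed

lemma gaps_above_multiplicity_card_le_sum_rr:
  "card ({mult_e R v..<cond_c R v} - vR R v) \<le> (\<Sum>i\<in>setA R v. rr R v i)"
proof -
  let ?m = "vs.rank vs.window_start"
  have "{mult_e R v..<cond_c R v} - vR R v \<subseteq> vals v (colon R (Rsub R v ?m)) - vR R v"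
  proof
    fix g assume g: "g \<in> {mult_e R v..<cond_c R v} - vR R v"
    have "int (cond_c R v) \<le> int g + v w" if "w \<in> Rsub R v ?m" "w \<noteq> 0" for w
    proof -
      have "int vs.window_start \<le> v w"
        using that vs.element_rank[OF vs.window_start(1)] by (simp add: Rsub_eq val_ge_iff)
      moreover have "mult_e R v \<le> g" using g by simp
      ultimately show ?thesis using vs.window_start(2) vs.multiplicity_le_conductor by linarith
    qed
    then show "g \<in> vals v (colon R (Rsub R v ?m)) - vR R v"
      using g by (intro gaps_subset_vals_colon) auto
  qed
  then have "card ({mult_e R v..<cond_c R v} - vR R v)
      \<le> card (vals v (colon R (Rsub R v ?m)) - vR R v)"
    using finite_vals_diff[OF val_ge_conductor_subset] by (intro card_mono) (auto simp: vR_def)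
  also have "\<dots> = (\<Sum>i\<in>setA R v. rr R v i)"
    unfolding setA_eq using sum_rr rank_window_start_less by simp
  finally show ?thesis .
qed

lemma sum_rr_setA_ge:
  "int (cond_c R v) - nnum R v - int (mult_e R v) + 1 \<le> (\<Sum>i\<in>setA R v. int (rr R v i))"
proof -
  have "card ({mult_e R v..<cond_c R v} - vR R v) + (mult_e R v - 1)
      = cond_c R v - card (vR R v \<inter> {..<cond_c R v})"
    using vs.card_gaps_above_multiplicity vs.card_gaps by simp
  moreover have "card (vR R v \<inter> {..<cond_c R v}) \<le> cond_c R v"
    using card_mono[of "{..<cond_c R v}" "vR R v \<inter> {..<cond_c R v}"] by simp
  ultimately show ?thesis
    using gaps_above_multiplicity_card_le_sum_rr multiplicity(2)
    unfolding nnum_eq by (simp add: of_nat_sum[symmetric] del: of_nat_sum)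
qed

lemma rr_le_type_r_setA:
  assumes "i \<in> setA R v"
  shows "rr R v i \<le> type_r R"
proof -
  obtain j where "i = Suc j" "j < vs.rank vs.window_start"
    using assms unfolding setA_eq by (cases i) auto
  then show ?thesis using rr_le_type_r[of j] rank_window_start_less by simp
qed

context
  fixes x assumes x_max: "x \<in> max_ideal R" and x_nonzero: "x \<noteq> 0" and v_x: "v x = int (mult_e R v)"
begin

lemma CxR_eq: "CxR R v x = plus_scaled (val_ge (int (cond_c R v))) x R"
  unfolding CxR_def plus_scaled_def colon_val_ring ..

lemma CxR: "submod R (CxR R v x)" "CxR R v x \<subseteq> R" "val_ge (int (cond_c R v)) \<subseteq> CxR R v x"
proof -
  have "x \<in> R" using x_max unfolding max_ideal_def by simp
  then show "submod R (CxR R v x)" "CxR R v x \<subseteq> R" "val_ge (int (cond_c R v)) \<subseteq> CxR R v x"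
    unfolding CxR_eq using submod_plus_scaled[OF submod_val_ge submod_R]
      plus_scaled_subset[OF submod_R val_ge_conductor_subset] R_mult subset_plus_scaled[OF R_zero]
    by auto
qed

lemma vals_CxR:
  "y \<in> vals v (CxR R v x) \<longleftrightarrow> cond_c R v \<le> y \<or> (mult_e R v \<le> y \<and> y - mult_e R v \<in> vR R v)"
proof
  assume "y \<in> vals v (CxR R v x)"
  then obtain u where u: "u \<in> CxR R v x" "u \<noteq> 0" "nat (v u) = y" by (rule valsE)
  then obtain a b where ab: "u = x * b + a" "a \<in> val_ge (int (cond_c R v))" "b \<in> R"
    unfolding CxR_eq plus_scaled_def by (auto simp: add.commute)
  from u(2) ab(2) show "cond_c R v \<le> y \<or> (mult_e R v \<le> y \<and> y - mult_e R v \<in> vR R v)"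
    unfolding ab(1)
  proof (cases rule: v_add_cases)
    case 1
    then have b: "b \<noteq> 0" by auto
    have "v u = int (mult_e R v) + v b"
      using 1(2) v_mult[OF x_nonzero b] v_x ab(1) by simp
    moreover have "0 \<le> v b" using v_nonneg[OF ab(3) b] .
    ultimately have "y - mult_e R v = nat (v b)" "mult_e R v \<le> y" using u(3) by auto
    moreover have "nat (v b) \<in> vR R v" using valsI[OF ab(3) b] unfolding vR_def .
    ultimately show ?thesis by simp
  next
    case 2
    then have "cond_c R v \<le> y" using u(3) ab(1) by (simp add: le_nat_iff)
    then show ?thesis by simp
  qed
next
  assume "cond_c R v \<le> y \<or> (mult_e R v \<le> y \<and> y - mult_e R v \<in> vR R v)"
  then show "y \<in> vals v (CxR R v x)"
  proof
    assume "cond_c R v \<le> y"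
    then show ?thesis using mem_vals_if_val_ge_subset[OF CxR(3)] by blast
  next
    assume y: "mult_e R v \<le> y \<and> y - mult_e R v \<in> vR R v"
    then obtain b where b: "b \<in> R" "b \<noteq> 0" "v b = int (y - mult_e R v)"
      unfolding mem_vR_iff by blast
    have "x * b \<in> CxR R v x"
      unfolding CxR_eq using scaled_mem_plus_scaled[OF _ b(1)] by (simp add: val_ge_iff)
    moreover have "nat (v (x * b)) = y" using v_mult[OF x_nonzero b(2)] v_x b(3) y by simp
    ultimately show ?thesis using valsI[of "x * b"] x_nonzero b(2) by fastforce
  qed
qed

lemma vR_diff_vals_CxR: "vR R v - vals v (CxR R v x) = vs.apery \<inter> {..<cond_c R v}"
  by (auto simp: vals_CxR vs.apery_def not_le)

lemma knum_eq: "knum R v x = card (vs.apery \<inter> {..<cond_c R v})"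
proof -
  have "knum R v x = card (vals v R - vals v (CxR R v x))"
    unfolding knum_def using CxR by (intro ell_eq_card_vals(1) submod_R subset_val_ring)
  then show ?thesis using vR_diff_vals_CxR unfolding vR_def by simp
qed

lemma Yset_eq: "Yset R v x = vs.apery \<inter> {..<cond_c R v} - {0}"
  using vR_diff_vals_CxR unfolding Yset_def by auto

lemma knum_eq_card_Yset: "knum R v x = card (Yset R v x) + 1"
proof -
  let ?K = "vs.apery \<inter> {..<cond_c R v}"
  have "0 \<in> ?K" using vs.zero_in_apery conductor_pos by simp
  then have "card ?K = Suc (card (?K - {0}))" by (intro card_Suc_Diff1[symmetric]) simp_all
  then show ?thesis unfolding knum_eq Yset_eq by simp
qed

lemma nnum_eq_sum_lnum: "nnum R v = pnum R v + 1 + (\<Sum>y\<in>Yset R v x. lnum R v y + 1)"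
proof -
  let ?K = "vs.apery \<inter> {..<cond_c R v}"
  have "0 \<in> ?K" using vs.zero_in_apery conductor_pos by simp
  then have "card (vR R v \<inter> {..<cond_c R v})
      = (vs.steps_below_conductor 0 + 1) + (\<Sum>y\<in>?K - {0}. vs.steps_below_conductor y + 1)"
    unfolding vs.card_below_conductor by (simp add: sum.remove)
  moreover have "(\<Sum>y\<in>?K - {0}. 1 + int (vs.steps_below_conductor y))
      = (\<Sum>y\<in>?K - {0}. lnum R v y + 1)"
    using lnum_eq by (intro sum.cong) auto
  ultimately show ?thesis
    unfolding nnum_eq pnum_eq Yset_eq by (simp add: of_nat_sum)
qed

lemma card_setA: "int (card (setA R v)) = nnum R v - int (knum R v x)"
  using vs.card_below_window
  unfolding setA_eq vs.rank_window_start nnum_eq knum_eq by simp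

end

end

theorem theorem2p2:
  fixes R :: "'k::field set" and v :: "'k \<Rightarrow> int" and x :: 'k
  assumes sub: "subring R"
    and qf: "quotient_field_of R"
    and noeth: "noetherian R"
    and loc: "local_ring R"
    and dim1: "krull_dim_one R"
    and nonreg: "\<not> regular_dim_one R"
    and dval: "normalized_dval v"
    and intcl: "integral_closure R = val_ring v"
    and fin: "finite_module R (val_ring v)"
    and resrat: "residually_rational R v"
    and xm: "x \<in> max_ideal R" and xnz: "x \<noteq> 0" and xv: "v x = int (mult_e R v)"
    and k1: "knum R v x > 1"
  shows
    "let b = bnum R v; c = int (cond_c R v); r = int (type_r R); e = int (mult_e R v);
         k = int (knum R v x); p = pnum R v; h = hnum R v;
         Y = Yset R v x; l = lnum R v;
         X1 = (k - 1) * (r - 1);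
         Y1 = k - (e - r);
         Z1 = (r + 1) * (p + (\<Sum>y\<in>Y. l y)) + k + h - p * e - 1
     in b = (r + 1) * (\<Sum>y\<in>Y. l y + 1) - (p + 1) * (e - r - 1) + h
      \<and> b = X1 + Y1 + Z1
      \<and> X1 \<ge> 0 \<and> Y1 \<ge> 0
      \<and> Z1 \<ge> (\<Sum>i\<in>setA R v. r - int (rr R v i))
      \<and> (\<Sum>i\<in>setA R v. r - int (rr R v i)) \<ge> 0
      \<and> c = (p + 1 + (\<Sum>y\<in>Y. l y + 1)) * (r + 1) - b"
proof -
  interpret analytically_irreducible_ring v R
    using sub dval intcl resrat qf fin loc nonreg by unfold_locales simp_all
  let ?n = "nnum R v" and ?k = "int (knum R v x)" and ?r = "int (type_r R)"
    and ?e = "int (mult_e R v)" and ?c = "int (cond_c R v)" and ?p = "pnum R v"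
    and ?L = "\<Sum>y\<in>Yset R v x. lnum R v y"
  let ?A = "\<Sum>i\<in>setA R v. ?r - int (rr R v i)"
  have k: "?k = int (card (Yset R v x)) + 1" using knum_eq_card_Yset[OF xm xnz xv] by simp
  have n: "?n = ?p + ?L + ?k"
    using nnum_eq_sum_lnum[OF xm xnz xv] k by (simp add: sum.distrib)
  have b: "bnum R v = ?n * ?r - (?c - ?n)" unfolding bnum_def nnum_def by simp
  have r: "?e - ?k \<le> ?r" "1 \<le> ?r"
    using type_r_ge knum_eq[OF xm xnz xv] by linarith+
  have "?A = (?n - ?k) * ?r - (\<Sum>i\<in>setA R v. int (rr R v i))"
    using card_setA[OF xm xnz xv] by (simp add: sum_subtractf)
  then have A: "?A \<le> (?n - ?k) * ?r + ?n + ?e - ?c - 1"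
    using sum_rr_setA_ge by linarith
  have A0: "0 \<le> ?A" using rr_le_type_r_setA by (intro sum_nonneg) simp
  have Z: "(?r + 1) * (?p + ?L) + ?k + hnum R v - ?p * ?e - 1 = (?n - ?k) * ?r + ?n + ?e - ?c - 1"
    unfolding hnum_def using n by (simp add: algebra_simps)
  have "0 \<le> (?k - 1) * (?r - 1)" using k1 r(2) by simp
  then show ?thesis
    unfolding Let_def Z using k n b r(1) A A0 by (simp add: sum.distrib hnum_def algebra_simps)
qed

end
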